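(* Let $\mathbb X$ be a basic space and $\mathcal D=(D,<,\rho)$ a computable partially ordered set. There exists a function $E:\mathbb N\times\mathbb X\to D$ in $\mathrm{Max}_{\mathrm{PR}}[\mathbb N\times\mathbb X\to\mathcal D]$ such that $\{E_n:n\in\mathbb N\}=\mathrm{Max}_{\mathrm{PR}}[\mathbb X\to\mathcal D]$, where $E_n:\mathbb X\to D$ is the partial function $x\mapsto E(n,x)$.
   Context: A basic space is a finite non-empty product of sets each of which is $\mathbb N$, $\mathbb Z$, or $A^*$ for some finite alphabet $A$. A computable partially ordered set is a triple $\mathcal D=(D,<,\rho)$ where $\rho:\mathbb N\to D$ is a bijection and $<$ is a strict partial order on $D$ with $\{(m,n):\rho(m)<\rho(n)\}$ computable; a partial function into $D$ is partial computable if its composition with $\rho^{-1}$ is. For a basic space $\mathbb Y$ and a partial $f:\mathbb Y\times\mathbb N\to D$ monotone increasing in its second argument on its domain, $\max^{\mathcal D}f$ is the partial function on $\mathbb Y$ defined exactly at those $y$ for which $\{f(y,t):t\in\mathbb N,\ f(y,t)\text{ defined}\}$ is finite and non-empty, with value its maximum element. $\mathrm{Max}_{\mathrm{PR}}[\mathbb Y\to\mathcal D]$ is the class of all $\max^{\mathcal D}f$ with $f$ partial computable and monotone increasing in its second argument. *)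

theory Defs
  imports Main "HOL-Library.Nat_Bijection"
begin

text \<open>A function of arity n is represented as a map on nat lists; only its
behaviour on lists of length n is relevant.\<close>

fun prec :: "(nat list \<Rightarrow> nat option) \<Rightarrow> (nat list \<Rightarrow> nat option) \<Rightarrow> nat \<Rightarrow> nat list \<Rightarrow> nat option" where
  "prec g h 0 ys = g ys"
| "prec g h (Suc k) ys = (case prec g h k ys of None \<Rightarrow> None | Some r \<Rightarrow> h (k # r # ys))"

definition mu :: "(nat list \<Rightarrow> nat option) \<Rightarrow> nat list \<Rightarrow> nat option" where
  "mu g xs = (if \<exists>k. g (k # xs) = Some 0 \<and> (\<forall>j<k. g (j # xs) \<noteq> None)
              then Some (LEAST k. g (k # xs) = Some 0 \<and> (\<forall>j<k. g (j # xs) \<noteq> None))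
              else None)"

inductive precfn :: "nat \<Rightarrow> (nat list \<Rightarrow> nat option) \<Rightarrow> bool" where
  zero: "precfn n (\<lambda>xs. Some 0)"
| succ: "precfn 1 (\<lambda>xs. Some (Suc (hd xs)))"
| proj: "i < n \<Longrightarrow> precfn n (\<lambda>xs. Some (xs ! i))"
| comp: "precfn m g \<Longrightarrow> length gs = m \<Longrightarrow> (\<forall>h\<in>set gs. precfn n h) \<Longrightarrow>
         precfn n (\<lambda>xs. if (\<forall>h\<in>set gs. h xs \<noteq> None) then g (map (\<lambda>h. the (h xs)) gs) else None)"
| prim_rec: "precfn n g \<Longrightarrow> precfn (n + 2) h \<Longrightarrow> precfn (Suc n) (\<lambda>xs. prec g h (hd xs) (tl xs))"
| minim: "precfn (Suc n) g \<Longrightarrow> precfn n (mu g)"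

definition partrec1 :: "(nat \<Rightarrow> nat option) \<Rightarrow> bool" where
  "partrec1 g \<longleftrightarrow> (\<exists>F. precfn 1 F \<and> (\<forall>x. g x = F [x]))"

definition totalrec1 :: "(nat \<Rightarrow> nat) \<Rightarrow> bool" where
  "totalrec1 g \<longleftrightarrow> partrec1 (\<lambda>x. Some (g x))"

text \<open>A component is \<open>\<nat>\<close> (CN), \<open>\<int>\<close> (CZ) or \<open>A\<^sup>*\<close> with A = {0..<k} (CW k).
A basic space is a nonempty list of components; its elements are lists of values.\<close>

datatype bcomp = CN | CZ | CW nat
datatype bval = VN nat | VZ int | VW "nat list"

fun in_comp :: "bcomp \<Rightarrow> bval \<Rightarrow> bool" where
  "in_comp CN (VN _) = True"
| "in_comp CZ (VZ _) = True"
| "in_comp (CW k) (VW w) = (\<forall>a\<in>set w. a < k)"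
| "in_comp _ _ = False"

definition in_space :: "bcomp list \<Rightarrow> bval list \<Rightarrow> bool" where
  "in_space X v \<longleftrightarrow> list_all2 in_comp X v"

fun enc_val :: "bval \<Rightarrow> nat" where
  "enc_val (VN n) = prod_encode (0, n)"
| "enc_val (VZ i) = prod_encode (1, int_encode i)"
| "enc_val (VW w) = prod_encode (2, list_encode w)"

definition enc :: "bval list \<Rightarrow> nat" where
  "enc v = list_encode (map enc_val v)"

definition computable_poset :: "('d \<Rightarrow> 'd \<Rightarrow> bool) \<Rightarrow> (nat \<Rightarrow> 'd) \<Rightarrow> bool" where
  "computable_poset lt \<rho> \<longleftrightarrow> bij \<rho> \<and> (\<forall>a. \<not> lt a a) \<and>
     (\<forall>a b c. lt a b \<longrightarrow> lt b c \<longrightarrow> lt a c) \<and>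
     totalrec1 (\<lambda>p. if lt (\<rho> (fst (prod_decode p))) (\<rho> (snd (prod_decode p))) then 1 else 0)"

text \<open>Partial computable f : Y \<times> \<nat> \<rightharpoonup> D (the pair (y,t) is the element y @ [VN t] of Y \<times> \<nat>).\<close>
definition pc2 :: "(nat \<Rightarrow> 'd) \<Rightarrow> bcomp list \<Rightarrow> (bval list \<Rightarrow> nat \<Rightarrow> 'd option) \<Rightarrow> bool" where
  "pc2 \<rho> Y f \<longleftrightarrow> (\<exists>g. partrec1 g \<and>
      (\<forall>y t. in_space Y y \<longrightarrow> map_option (inv \<rho>) (f y t) = g (enc (y @ [VN t]))))"

definition mono2 :: "('d \<Rightarrow> 'd \<Rightarrow> bool) \<Rightarrow> (bval list \<Rightarrow> nat \<Rightarrow> 'd option) \<Rightarrow> bool" where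
  "mono2 lt f \<longleftrightarrow> (\<forall>y t t' a b. t \<le> t' \<longrightarrow> f y t = Some a \<longrightarrow> f y t' = Some b \<longrightarrow> a = b \<or> lt a b)"

definition maxD :: "('d \<Rightarrow> 'd \<Rightarrow> bool) \<Rightarrow> (bval list \<Rightarrow> nat \<Rightarrow> 'd option) \<Rightarrow> bval list \<Rightarrow> 'd option" where
  "maxD lt f y = (let S = {a. \<exists>t. f y t = Some a} in
     if finite S \<and> S \<noteq> {} then Some (THE m. m \<in> S \<and> (\<forall>s\<in>S. s = m \<or> lt s m)) else None)"

text \<open>Partial functions on a basic space Y are represented as maps bval list \<Rightarrow> 'd option
that are undefined outside Y.\<close>
definition MaxPR :: "bcomp list \<Rightarrow> ('d \<Rightarrow> 'd \<Rightarrow> bool) \<Rightarrow> (nat \<Rightarrow> 'd) \<Rightarrow> (bval list \<Rightarrow> 'd option) set" where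
  "MaxPR Y lt \<rho> = {maxD lt f | f. pc2 \<rho> Y f \<and> mono2 lt f \<and>
                                   (\<forall>y t. \<not> in_space Y y \<longrightarrow> f y t = None)}"

end

theory Submission
  imports Defs
begin

text \<open>
  Every partial recursive function is computed by a program of one fixed stack machine whose step
  function is total recursive on codes (a Kleene normal form). So a single partial recursive function
  can run program \<open>c\<close> on input \<open>(x, s)\<close> for \<open>k\<close> steps, for all pairs \<open>(s, k)\<close>: this enumerates the
  values of the \<open>c\<close>-th approximating sequence at \<open>x\<close>. Taking running maxima along the enumeration,
  and failing as soon as two values are incomparable, yields a sequence that is monotone by
  construction, so each row has its maximum in \<open>Max_PR\<close>. If the \<open>c\<close>-th sequence is monotone, its
  values form a chain and the running maxima have the same maximum, so every element of \<open>Max_PR\<close> is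
  a row.
\<close>

section \<open>Partial and total recursive functions of fixed arity\<close>

definition partrec :: "nat \<Rightarrow> (nat list \<Rightarrow> nat option) \<Rightarrow> bool" where
  "partrec n G \<longleftrightarrow> (\<exists>F. precfn n F \<and> (\<forall>xs. length xs = n \<longrightarrow> F xs = G xs))"

definition totrec :: "nat \<Rightarrow> (nat list \<Rightarrow> nat) \<Rightarrow> bool" where
  "totrec n f \<longleftrightarrow> partrec n (\<lambda>xs. Some (f xs))"

lemma length_eq_1_conv: "length xs = 1 \<longleftrightarrow> xs = [hd xs]"
  by (cases xs) auto

lemma partrec1_iff: "partrec1 g \<longleftrightarrow> partrec 1 (\<lambda>xs. g (hd xs))"
  unfolding partrec1_def partrec_def by (metis length_eq_1_conv list.sel(1))

lemma totalrec1_iff: "totalrec1 f \<longleftrightarrow> totrec 1 (\<lambda>xs. f (hd xs))"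
  unfolding totalrec1_def totrec_def partrec1_iff ..

lemma partrec_cong: "partrec n f \<Longrightarrow> (\<And>xs. length xs = n \<Longrightarrow> f xs = g xs) \<Longrightarrow> partrec n g"
  unfolding partrec_def by metis

lemma precfn_partrec: "precfn n F \<Longrightarrow> partrec n F"
  unfolding partrec_def by blast

lemma list_all2_choice: "\<forall>x\<in>set xs. \<exists>y. P x y \<Longrightarrow> \<exists>ys. list_all2 P xs ys"
  by (induction xs) (auto intro: list_all2_Cons[THEN iffD2])

lemma partrec_comp:
  assumes g: "partrec m g" and l: "length gs = m" and hs: "\<forall>h\<in>set gs. partrec n h"
  shows "partrec n (\<lambda>xs. if (\<forall>h\<in>set gs. h xs \<noteq> None) then g (map (\<lambda>h. the (h xs)) gs) else None)"
proof -
  obtain G where G: "precfn m G" "\<forall>xs. length xs = m \<longrightarrow> G xs = g xs"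
    using g unfolding partrec_def by blast
  have "\<forall>h\<in>set gs. \<exists>F. precfn n F \<and> (\<forall>xs. length xs = n \<longrightarrow> F xs = h xs)"
    using hs unfolding partrec_def by blast
  from list_all2_choice[OF this]
  obtain Fs where Fs: "list_all2 (\<lambda>h F. precfn n F \<and> (\<forall>xs. length xs = n \<longrightarrow> F xs = h xs)) gs Fs"
    by blast
  have len: "length Fs = m"
    using Fs l by (simp add: list_all2_lengthD)
  have Fs_precfn: "\<forall>F\<in>set Fs. precfn n F"
    using Fs by (auto simp: list_all2_conv_all_nth set_conv_nth)
  have agree: "map (\<lambda>F. F xs) Fs = map (\<lambda>h. h xs) gs" if "length xs = n" for xs
    using Fs that by (simp add: list_all2_conv_all_nth list_eq_iff_nth_eq)
  have "partrec n (\<lambda>xs. if (\<forall>F\<in>set Fs. F xs \<noteq> None) then G (map (\<lambda>F. the (F xs)) Fs) else None)"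
    using precfn.comp[OF G(1) len Fs_precfn] by (rule precfn_partrec)
  then show ?thesis
  proof (rule partrec_cong)
    fix xs :: "nat list" assume xs: "length xs = n"
    have "(\<forall>F\<in>set Fs. F xs \<noteq> None) \<longleftrightarrow> (\<forall>v\<in>set (map (\<lambda>F. F xs) Fs). v \<noteq> None)"
      by simp
    also have "\<dots> \<longleftrightarrow> (\<forall>h\<in>set gs. h xs \<noteq> None)"
      unfolding agree[OF xs] by simp
    finally have defined: "(\<forall>F\<in>set Fs. F xs \<noteq> None) \<longleftrightarrow> (\<forall>h\<in>set gs. h xs \<noteq> None)" .
    have args: "map (\<lambda>F. the (F xs)) Fs = map (\<lambda>h. the (h xs)) gs"
      using arg_cong[OF agree[OF xs], of "map the"] by (simp add: comp_def)
    have G_eq: "G (map (\<lambda>h. the (h xs)) gs) = g (map (\<lambda>h. the (h xs)) gs)"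
      using G(2) l by simp
    show "(if \<forall>F\<in>set Fs. F xs \<noteq> None then G (map (\<lambda>F. the (F xs)) Fs) else None) =
               (if \<forall>h\<in>set gs. h xs \<noteq> None then g (map (\<lambda>h. the (h xs)) gs) else None)"
      by (simp only: defined args G_eq)
  qed
qed

lemma prec_cong:
  assumes "\<And>ys. length ys = n \<Longrightarrow> G ys = g ys" and "\<And>zs. length zs = n + 2 \<Longrightarrow> H zs = h zs"
    and "length ys = n"
  shows "prec G H k ys = prec g h k ys"
proof (induction k)
  case (Suc k)
  then show ?case
    using assms by (cases "prec g h k ys") simp_all
qed (simp add: assms)

lemma partrec_prim_rec:
  assumes "partrec n g" "partrec (n + 2) h"
  shows "partrec (Suc n) (\<lambda>xs. prec g h (hd xs) (tl xs))"
proof -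
  obtain G H where G: "precfn n G" "\<forall>xs. length xs = n \<longrightarrow> G xs = g xs"
    and H: "precfn (n + 2) H" "\<forall>xs. length xs = n + 2 \<longrightarrow> H xs = h xs"
    using assms unfolding partrec_def by blast
  have "partrec (Suc n) (\<lambda>xs. prec G H (hd xs) (tl xs))"
    by (rule precfn_partrec, rule precfn.prim_rec[OF G(1) H(1)])
  then show ?thesis
    by (rule partrec_cong) (simp add: prec_cong[of n G g H h] G(2) H(2))
qed

lemma partrec_mu:
  assumes "partrec (Suc n) g"
  shows "partrec n (mu g)"
proof -
  obtain G where G: "precfn (Suc n) G" "\<forall>xs. length xs = Suc n \<longrightarrow> G xs = g xs"
    using assms unfolding partrec_def by blast
  have "partrec n (mu G)"
    by (rule precfn_partrec, rule precfn.minim[OF G(1)])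
  then show ?thesis
    by (rule partrec_cong) (simp add: mu_def G(2))
qed

lemma totrec_cong: "totrec n f \<Longrightarrow> (\<And>xs. length xs = n \<Longrightarrow> f xs = g xs) \<Longrightarrow> totrec n g"
  unfolding totrec_def by (erule partrec_cong) simp

lemma totrec_zero: "totrec n (\<lambda>xs. 0)"
  unfolding totrec_def by (rule precfn_partrec, rule precfn.zero)

lemma totrec_succ: "totrec 1 (\<lambda>xs. Suc (hd xs))"
  unfolding totrec_def by (rule precfn_partrec, rule precfn.succ)

lemma totrec_proj: "i < n \<Longrightarrow> totrec n (\<lambda>xs. xs ! i)"
  unfolding totrec_def by (rule precfn_partrec, rule precfn.proj)

lemma totrec_comp:
  assumes "totrec m g" "length fs = m" "\<forall>f\<in>set fs. totrec n f"
  shows "totrec n (\<lambda>xs. g (map (\<lambda>f. f xs) fs))"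
proof -
  have "partrec n (\<lambda>xs. if (\<forall>h\<in>set (map (\<lambda>f xs. Some (f xs)) fs). h xs \<noteq> None)
          then Some (g (map (\<lambda>h. the (h xs)) (map (\<lambda>f xs. Some (f xs)) fs))) else None)"
    by (rule partrec_comp) (use assms in \<open>auto simp: totrec_def\<close>)
  then show ?thesis
    unfolding totrec_def by (rule partrec_cong) (simp add: comp_def)
qed

lemma totrec_comp1: "totrec 1 g \<Longrightarrow> totrec n f \<Longrightarrow> totrec n (\<lambda>xs. g [f xs])"
  using totrec_comp[of 1 g "[f]" n] by simp

lemma totrec_comp2: "totrec 2 g \<Longrightarrow> totrec n f1 \<Longrightarrow> totrec n f2 \<Longrightarrow> totrec n (\<lambda>xs. g [f1 xs, f2 xs])"
  using totrec_comp[of 2 g "[f1, f2]" n] by simp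

lemma totrec_comp3:
  "totrec 3 g \<Longrightarrow> totrec n f1 \<Longrightarrow> totrec n f2 \<Longrightarrow> totrec n f3 \<Longrightarrow> totrec n (\<lambda>xs. g [f1 xs, f2 xs, f3 xs])"
  using totrec_comp[of 3 g "[f1, f2, f3]" n] by simp

lemma prec_Some: "prec (\<lambda>ys. Some (g ys)) (\<lambda>zs. Some (h zs)) k ys = Some (rec_nat (g ys) (\<lambda>k r. h (k # r # ys)) k)"
  by (induction k) auto

lemma totrec_prim_rec:
  assumes "totrec n g" "totrec (n + 2) h"
  shows "totrec (Suc n) (\<lambda>xs. rec_nat (g (tl xs)) (\<lambda>k r. h (k # r # tl xs)) (hd xs))"
  using partrec_prim_rec[OF assms[unfolded totrec_def]] unfolding totrec_def prec_Some .

lemma totrec_const: "totrec n (\<lambda>xs. c)"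
proof (induction c)
  case (Suc c)
  from totrec_comp1[OF totrec_succ Suc] show ?case by simp
qed (rule totrec_zero)

lemma totrec_rec_1:
  assumes "totrec 2 (\<lambda>zs. h (zs!0) (zs!1))"
  shows "totrec 1 (\<lambda>xs. rec_nat c h (hd xs))"
  using totrec_prim_rec[of 0 "\<lambda>_. c" "\<lambda>zs. h (zs!0) (zs!1)"] totrec_const assms by (simp add: numeral_2_eq_2)

lemma totrec_rec_2:
  assumes "totrec 1 (\<lambda>xs. g (hd xs))" and "totrec 3 (\<lambda>zs. h (zs!0) (zs!1) (zs!2))"
  shows "totrec 2 (\<lambda>xs. rec_nat (g (xs!1)) (\<lambda>k r. h k r (xs!1)) (xs!0))"
proof -
  have "totrec 2 (\<lambda>xs. rec_nat (g (hd (tl xs))) (\<lambda>k r. h k r (tl xs ! 0)) (hd xs))"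
    using totrec_prim_rec[of 1 "\<lambda>ys. g (hd ys)" "\<lambda>zs. h (zs!0) (zs!1) (zs!2)"] assms
    by (simp add: numeral_2_eq_2 numeral_3_eq_3)
  then show ?thesis
    by (rule totrec_cong) (auto simp: length_Suc_conv numeral_2_eq_2)
qed

lemma totrec_hd: "totrec 1 (\<lambda>xs. hd xs)"
proof -
  have "totrec 1 (\<lambda>xs. xs ! 0)"
    by (rule totrec_proj) simp
  then show ?thesis
    by (rule totrec_cong) (auto simp: length_Suc_conv)
qed

lemma totrec_add: "totrec 2 (\<lambda>xs. xs!0 + xs!1)"
proof -
  have "totrec 3 (\<lambda>zs. zs!1)"
    by (rule totrec_proj) simp
  then have "totrec 3 (\<lambda>zs. Suc (zs!1))"
    using totrec_comp1[OF totrec_succ] by fastforce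
  then have "totrec 2 (\<lambda>xs. rec_nat (xs!1) (\<lambda>k r. Suc r) (xs!0))"
    by (rule totrec_rec_2[OF totrec_hd, of "\<lambda>k r y. Suc r"])
  moreover have "rec_nat b (\<lambda>k r. Suc r) a = a + b" for a b
    by (induction a) auto
  ultimately show ?thesis
    by simp
qed

lemma totrec_rev_diff: "totrec 2 (\<lambda>xs. xs!1 - xs!0)"
proof -
  have "totrec 2 (\<lambda>zs. zs!0)"
    by (rule totrec_proj) simp
  then have "totrec 1 (\<lambda>xs. rec_nat 0 (\<lambda>k r. k) (hd xs))"
    by (rule totrec_rec_1)
  moreover have "rec_nat 0 (\<lambda>k r. k) n = n - 1" for n
    by (cases n) auto
  ultimately have pred: "totrec 1 (\<lambda>xs. hd xs - 1)"
    by simp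
  have "totrec 3 (\<lambda>zs. zs!1)"
    by (rule totrec_proj) simp
  then have "totrec 3 (\<lambda>zs. zs!1 - 1)"
    using totrec_comp1[OF pred] by fastforce
  then have "totrec 2 (\<lambda>xs. rec_nat (xs!1) (\<lambda>k r. r - 1) (xs!0))"
    by (rule totrec_rec_2[OF totrec_hd, of "\<lambda>k r y. r - 1"])
  moreover have "rec_nat b (\<lambda>k r. r - 1) a = b - a" for a b
    by (induction a) auto
  ultimately show ?thesis
    by simp
qed

lemma totrec_triangle: "totrec 1 (\<lambda>xs. triangle (hd xs))"
proof -
  have "totrec 2 (\<lambda>zs. zs!0)" "totrec 2 (\<lambda>zs. zs!1)"
    by (rule totrec_proj, simp)+
  then have "totrec 2 (\<lambda>zs. zs!1 + Suc (zs!0))"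
    using totrec_comp2[OF totrec_add] totrec_comp1[OF totrec_succ] by fastforce
  then have "totrec 1 (\<lambda>xs. rec_nat 0 (\<lambda>k r. r + Suc k) (hd xs))"
    by (rule totrec_rec_1)
  moreover have "rec_nat 0 (\<lambda>k r. r + Suc k) n = triangle n" for n
    by (induction n) auto
  ultimately show ?thesis
    by simp
qed

lemma totrec_funpow:
  assumes "totrec 1 (\<lambda>xs. h (hd xs))"
  shows "totrec 2 (\<lambda>xs. (h ^^ xs!0) (xs!1))"
proof -
  have "totrec 3 (\<lambda>zs. zs!1)"
    by (rule totrec_proj) simp
  then have "totrec 3 (\<lambda>zs. h (zs!1))"
    using totrec_comp1[OF assms] by fastforce
  then have "totrec 2 (\<lambda>xs. rec_nat (xs!1) (\<lambda>k r. h r) (xs!0))"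
    by (rule totrec_rec_2[OF totrec_hd, of "\<lambda>k r y. h r"])
  moreover have "rec_nat b (\<lambda>k r. h r) a = (h ^^ a) b" for a b
    by (induction a) auto
  ultimately show ?thesis
    by simp
qed

lemma totrec_if_zero: "totrec 3 (\<lambda>xs. if xs!0 = 0 then xs!1 else xs!2)"
proof -
  have "totrec 2 (\<lambda>xs. xs!0)" "totrec (2 + 2) (\<lambda>xs. xs!3)"
    by (rule totrec_proj, simp)+
  from totrec_prim_rec[OF this]
  have "totrec 3 (\<lambda>xs. rec_nat (tl xs ! 0) (\<lambda>k r. (k # r # tl xs) ! 3) (hd xs))"
    by (simp add: numeral_3_eq_3)
  moreover have rec_const: "rec_nat a (\<lambda>k r. c) n = (if n = 0 then a else c)" for a c n
    by (cases n) auto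
  ultimately show ?thesis
    by (auto simp: length_Suc_conv numeral_3_eq_3 rec_const elim!: totrec_cong)
qed

lemma totalrec1_id: "totalrec1 (\<lambda>x. x)"
  unfolding totalrec1_iff by (rule totrec_hd)

lemma totalrec1_const: "totalrec1 (\<lambda>x. c)"
  unfolding totalrec1_iff by (rule totrec_const)

lemma totalrec1_comp: "totalrec1 h \<Longrightarrow> totalrec1 f \<Longrightarrow> totalrec1 (\<lambda>x. h (f x))"
  unfolding totalrec1_iff using totrec_comp1[of "\<lambda>ys. h (hd ys)" 1 "\<lambda>xs. f (hd xs)"] by simp

lemma totalrec1_op2:
  "totrec 2 (\<lambda>xs. op (xs!0) (xs!1)) \<Longrightarrow> totalrec1 f \<Longrightarrow> totalrec1 g \<Longrightarrow> totalrec1 (\<lambda>x. op (f x) (g x))"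
  unfolding totalrec1_iff using totrec_comp2[of "\<lambda>xs. op (xs!0) (xs!1)" 1 "\<lambda>xs. f (hd xs)" "\<lambda>xs. g (hd xs)"]
  by simp

lemma totalrec1_op3:
  "totrec 3 (\<lambda>xs. op (xs!0) (xs!1) (xs!2)) \<Longrightarrow> totalrec1 f \<Longrightarrow> totalrec1 g \<Longrightarrow> totalrec1 h \<Longrightarrow>
   totalrec1 (\<lambda>x. op (f x) (g x) (h x))"
  unfolding totalrec1_iff
  using totrec_comp3[of "\<lambda>xs. op (xs!0) (xs!1) (xs!2)" 1 "\<lambda>xs. f (hd xs)" "\<lambda>xs. g (hd xs)" "\<lambda>xs. h (hd xs)"]
  by simp

lemma totalrec1_Suc: "totalrec1 f \<Longrightarrow> totalrec1 (\<lambda>x. Suc (f x))"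
  using totalrec1_comp[of Suc] totrec_succ unfolding totalrec1_iff by blast

lemma totalrec1_add: "totalrec1 f \<Longrightarrow> totalrec1 g \<Longrightarrow> totalrec1 (\<lambda>x. f x + g x)"
  by (rule totalrec1_op2[OF totrec_add])

lemma totalrec1_diff: "totalrec1 f \<Longrightarrow> totalrec1 g \<Longrightarrow> totalrec1 (\<lambda>x. f x - g x)"
  using totalrec1_op2[OF totrec_rev_diff, of g f] by simp

lemma totalrec1_triangle: "totalrec1 f \<Longrightarrow> totalrec1 (\<lambda>x. triangle (f x))"
  using totalrec1_comp[of triangle] totrec_triangle unfolding totalrec1_iff by blast

lemma totalrec1_if:
  assumes "totalrec1 f" "totalrec1 g" "totalrec1 h" "totalrec1 k"
  shows "totalrec1 (\<lambda>x. if f x = g x then h x else k x)"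
proof -
  have "totalrec1 (\<lambda>x. if (f x - g x) + (g x - f x) = 0 then h x else k x)"
    by (rule totalrec1_op3[OF totrec_if_zero]) (use assms in \<open>auto intro: totalrec1_add totalrec1_diff\<close>)
  moreover have "((f x - g x) + (g x - f x) = 0) = (f x = g x)" for x
    by auto
  ultimately show ?thesis
    by simp
qed

lemma totalrec1_funpow:
  "totalrec1 h \<Longrightarrow> totalrec1 f \<Longrightarrow> totalrec1 g \<Longrightarrow> totalrec1 (\<lambda>x. (h ^^ f x) (g x))"
  unfolding totalrec1_iff[of h] by (drule totrec_funpow) (rule totalrec1_op2)

definition npair :: "nat \<Rightarrow> nat \<Rightarrow> nat" where
  "npair a b = prod_encode (a, b)"

definition nfst :: "nat \<Rightarrow> nat" where
  "nfst n = fst (prod_decode n)"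

definition nsnd :: "nat \<Rightarrow> nat" where
  "nsnd n = snd (prod_decode n)"

lemma nfst_npair [simp]: "nfst (npair a b) = a"
  and nsnd_npair [simp]: "nsnd (npair a b) = b"
  unfolding nfst_def nsnd_def npair_def by simp_all

lemma npair_eq_iff [simp]: "npair a b = npair c d \<longleftrightarrow> a = c \<and> b = d"
  unfolding npair_def by simp

lemma npair_nfst_nsnd: "npair (nfst n) (nsnd n) = n"
  unfolding npair_def nfst_def nsnd_def by simp

lemma npair_0_0: "npair 0 0 = 0"
  unfolding npair_def prod_encode_def by simp

lemma totalrec1_npair: "totalrec1 f \<Longrightarrow> totalrec1 g \<Longrightarrow> totalrec1 (\<lambda>x. npair (f x) (g x))"
proof -
  have "npair a b = triangle (a + b) + a" for a b
    unfolding npair_def prod_encode_def by simp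
  then show "totalrec1 f \<Longrightarrow> totalrec1 g \<Longrightarrow> totalrec1 (\<lambda>x. npair (f x) (g x))"
    by (simp add: totalrec1_add totalrec1_triangle)
qed

definition diagonal :: "nat \<Rightarrow> nat" where
  "diagonal p = (LEAST s. p < triangle (Suc s))"

lemma prod_decode_diagonal:
  "prod_decode p = (p - triangle (diagonal p), diagonal p - (p - triangle (diagonal p)))"
proof -
  define s where "s = diagonal p"
  have "p < triangle (Suc p)"
    by (induction p) auto
  then have hi: "p < triangle (Suc s)"
    unfolding s_def diagonal_def by (rule LeastI)
  have lo: "triangle s \<le> p"
  proof (cases s)
    case (Suc s')
    then have "\<not> p < triangle (Suc s')"
      unfolding s_def diagonal_def by (metis lessI not_less_Least)
    then show ?thesis
      using Suc by simp
  qed simp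
  have "prod_encode (p - triangle s, s - (p - triangle s)) = p"
    using hi lo unfolding prod_encode_def by simp
  then show ?thesis
    unfolding s_def by (metis prod_encode_inverse)
qed

lemma totalrec1_diagonal: "totalrec1 diagonal"
proof -
  have p0: "totrec 2 (\<lambda>xs. xs!0)" and p1: "totrec 2 (\<lambda>xs. xs!1)"
    by (rule totrec_proj, simp)+
  have "totrec 2 (\<lambda>xs. triangle (Suc (xs!0)))"
    using totrec_comp1[OF totrec_triangle totrec_comp1[OF totrec_succ p0]] by simp
  moreover have "totrec 2 (\<lambda>xs. Suc (xs!1))"
    using totrec_comp1[OF totrec_succ p1] by simp
  ultimately have "totrec 2 (\<lambda>xs. Suc (xs!1) - triangle (Suc (xs!0)))"
    using totrec_comp2[OF totrec_rev_diff] by fastforce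
  then have "partrec 1 (mu (\<lambda>xs. Some (Suc (xs!1) - triangle (Suc (xs!0)))))"
    unfolding totrec_def by (rule partrec_mu[of 1, unfolded Suc_1])
  then show ?thesis
    unfolding totalrec1_iff totrec_def
  proof (rule partrec_cong)
    fix xs :: "nat list" assume "length xs = 1"
    then obtain p where xs: "xs = [p]"
      by (metis length_eq_1_conv)
    have "\<exists>k. p < triangle (Suc k)"
      by (rule exI[of _ p], induction p) auto
    then show "mu (\<lambda>xs. Some (Suc (xs!1) - triangle (Suc (xs!0)))) xs = Some (diagonal (hd xs))"
      unfolding xs mu_def diagonal_def by (simp add: less_Suc_eq_le)
  qed
qed

lemma totalrec1_nfst: "totalrec1 f \<Longrightarrow> totalrec1 (\<lambda>x. nfst (f x))"
  unfolding nfst_def prod_decode_diagonal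
  by (auto intro!: totalrec1_diff totalrec1_triangle totalrec1_comp[OF totalrec1_diagonal])

lemma totalrec1_nsnd: "totalrec1 f \<Longrightarrow> totalrec1 (\<lambda>x. nsnd (f x))"
  unfolding nsnd_def prod_decode_diagonal
  by (auto intro!: totalrec1_diff totalrec1_triangle totalrec1_comp[OF totalrec1_diagonal])

lemma partrec1_comp_totalrec1: "partrec1 G \<Longrightarrow> totalrec1 h \<Longrightarrow> partrec1 (\<lambda>x. G (h x))"
  unfolding partrec1_iff totalrec1_iff totrec_def
  using partrec_comp[of 1 "\<lambda>ys. G (hd ys)" "[\<lambda>xs. Some (h (hd xs))]" 1] by simp

lemma partrec1_guard:
  assumes t: "totalrec1 t" and v: "totalrec1 v"
  shows "partrec1 (\<lambda>x. if t x = 0 then Some (v x) else None)"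
proof -
  \<comment> \<open>Minimizing \<open>t x\<close> over a dummy variable returns \<open>0\<close> if \<open>t x = 0\<close> and diverges otherwise.\<close>
  have second: "totrec 2 (\<lambda>xs. xs!1)"
    by (rule totrec_proj) simp
  have "totrec 2 (\<lambda>xs. t (xs!1))"
    using totrec_comp1[OF t[unfolded totalrec1_iff] second] by simp
  then have search: "partrec 1 (mu (\<lambda>xs. Some (t (xs!1))))"
    unfolding totrec_def by (rule partrec_mu[of 1, unfolded Suc_1])
  have "totrec 2 (\<lambda>ys. v (ys!1))"
    using totrec_comp1[OF v[unfolded totalrec1_iff] second] by simp
  then have "partrec 1 (\<lambda>xs. if \<forall>h\<in>set [mu (\<lambda>xs. Some (t (xs!1))), \<lambda>xs. Some (hd xs)]. h xs \<noteq> None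
      then Some (v (map (\<lambda>h. the (h xs)) [mu (\<lambda>xs. Some (t (xs!1))), \<lambda>xs. Some (hd xs)] ! 1)) else None)"
    unfolding totrec_def
    by (rule partrec_comp) (use search totalrec1_id in \<open>auto simp: totalrec1_iff totrec_def\<close>)
  then show ?thesis
    unfolding partrec1_iff
    by (rule partrec_cong) (auto simp: length_Suc_conv mu_def)
qed

section \<open>Programs for partial recursive functions\<close>

datatype prog = Zero | Succ | Proj nat | Comp prog "prog list" | Prec prog prog | Mu prog

text \<open>Total variants of \<^const>\<open>hd\<close> and \<^const>\<open>nth\<close> with default \<open>0\<close>, matching the coded list operations.\<close>

definition hd0 :: "nat list \<Rightarrow> nat" where
  "hd0 xs = (case xs of [] \<Rightarrow> 0 | x # _ \<Rightarrow> x)"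

definition nth0 :: "nat \<Rightarrow> nat list \<Rightarrow> nat" where
  "nth0 i xs = (if i < length xs then xs ! i else 0)"

inductive eval :: "prog \<Rightarrow> nat list \<Rightarrow> nat \<Rightarrow> bool"
  and eval_prec :: "prog \<Rightarrow> prog \<Rightarrow> nat \<Rightarrow> nat list \<Rightarrow> nat \<Rightarrow> bool" where
  eval_ZeroI: "eval Zero xs 0"
| eval_SuccI: "eval Succ xs (Suc (hd0 xs))"
| eval_ProjI: "eval (Proj i) xs (nth0 i xs)"
| eval_CompI: "list_all2 (\<lambda>h r. eval h xs r) hs rs \<Longrightarrow> eval g rs r \<Longrightarrow> eval (Comp g hs) xs r"
| eval_PrecI: "eval_prec g h (hd0 xs) (tl xs) r \<Longrightarrow> eval (Prec g h) xs r"
| eval_MuI: "eval g (k # xs) 0 \<Longrightarrow> (\<forall>j<k. \<exists>v. eval g (j # xs) (Suc v)) \<Longrightarrow> eval (Mu g) xs k"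
| eval_prec_0I: "eval g ys r \<Longrightarrow> eval_prec g h 0 ys r"
| eval_prec_SucI: "eval_prec g h k ys r0 \<Longrightarrow> eval h (k # r0 # ys) r \<Longrightarrow> eval_prec g h (Suc k) ys r"

inductive_simps eval_Zero: "eval Zero xs r"
  and eval_Succ: "eval Succ xs r"
  and eval_Proj: "eval (Proj i) xs r"
  and eval_Comp: "eval (Comp g hs) xs r"
  and eval_Prec: "eval (Prec g h) xs r"
  and eval_Mu: "eval (Mu g) xs r"
  and eval_prec_0: "eval_prec g h 0 ys r"
  and eval_prec_Suc: "eval_prec g h (Suc k) ys r"

definition computes :: "nat \<Rightarrow> (nat list \<Rightarrow> nat option) \<Rightarrow> prog \<Rightarrow> bool" where
  "computes n F p \<longleftrightarrow> (\<forall>xs. length xs = n \<longrightarrow> (\<forall>r. F xs = Some r \<longleftrightarrow> eval p xs r))"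

lemma mu_eq_Some_iff:
  "mu G xs = Some k \<longleftrightarrow> G (k # xs) = Some 0 \<and> (\<forall>j<k. \<exists>v. G (j # xs) = Some (Suc v))"
  (is "_ \<longleftrightarrow> ?R k")
proof -
  let ?P = "\<lambda>k. G (k # xs) = Some 0 \<and> (\<forall>j<k. G (j # xs) \<noteq> None)"
  have least_iff: "(LEAST k. ?P k) = k \<longleftrightarrow> ?R k" if "?P k" for k
  proof
    assume least: "(LEAST k. ?P k) = k"
    have "\<exists>v. G (j # xs) = Some (Suc v)" if "j < k" for j
    proof -
      have "\<not> ?P j"
        using not_less_Least[of j ?P] least \<open>j < k\<close> by simp
      moreover have "\<forall>i<j. G (i # xs) \<noteq> None" and "G (j # xs) \<noteq> None"
        using \<open>?P k\<close> \<open>j < k\<close> by auto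
      ultimately show ?thesis
        by (metis not0_implies_Suc option.exhaust)
    qed
    then show "?R k"
      using \<open>?P k\<close> by blast
  next
    assume "?R k"
    then show "(LEAST k. ?P k) = k"
      by (intro Least_equality) (auto, metis not_le nat.distinct(1) option.inject)
  qed
  show ?thesis
  proof
    assume "mu G xs = Some k"
    then have ex: "\<exists>k. ?P k" and k: "k = (LEAST k. ?P k)"
      unfolding mu_def by (auto split: if_splits)
    have "?P k"
      unfolding k by (rule LeastI_ex[OF ex])
    then show "?R k"
      using least_iff k by blast
  next
    assume "?R k"
    then have "?P k"
      by auto
    then show "mu G xs = Some k"
      unfolding mu_def using least_iff \<open>?R k\<close> by auto
  qed
qed

lemma computes_comp_args:
  assumes "list_all2 (\<lambda>h p. computes n h p) gs ps" "length xs = n"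
  shows "list_all2 (\<lambda>p r. eval p xs r) ps rs \<longleftrightarrow> (\<forall>h\<in>set gs. h xs \<noteq> None) \<and> rs = map (\<lambda>h. the (h xs)) gs"
  using assms(1)
proof (induction arbitrary: rs rule: list_all2_induct)
  case (Cons h hs p ps)
  have "eval p xs r \<longleftrightarrow> h xs = Some r" for r
    using Cons.hyps(1) assms(2) unfolding computes_def by simp
  then show ?case
    using Cons.IH by (cases rs) auto
qed simp

lemma prec_eq_Some_iff:
  assumes "computes n G g" "computes (n + 2) H h" "length ys = n"
  shows "prec G H k ys = Some r \<longleftrightarrow> eval_prec g h k ys r"
proof (induction k arbitrary: r)
  case 0
  then show ?case
    using assms unfolding computes_def by (simp add: eval_prec_0)
next
  case (Suc k)
  have "prec G H (Suc k) ys = Some r \<longleftrightarrow> (\<exists>r0. prec G H k ys = Some r0 \<and> H (k # r0 # ys) = Some r)"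
    by (auto split: option.splits)
  also have "\<dots> \<longleftrightarrow> (\<exists>r0. eval_prec g h k ys r0 \<and> eval h (k # r0 # ys) r)"
    using Suc.IH assms(2,3) unfolding computes_def by simp
  finally show ?case
    by (simp add: eval_prec_Suc)
qed

lemma precfn_computed: "precfn n F \<Longrightarrow> \<exists>p. computes n F p"
proof (induction rule: precfn.induct)
  case (zero n)
  then show ?case
    by (auto simp: computes_def eval_Zero intro!: exI[of _ Zero])
next
  case succ
  show ?case
    by (rule exI[of _ Succ]) (auto simp: computes_def eval_Succ hd0_def length_Suc_conv)
next
  case (proj i n)
  then show ?case
    by (auto simp: computes_def eval_Proj nth0_def intro!: exI[of _ "Proj i"])
next
  case (comp m g gs n)
  obtain pg where pg: "computes m g pg"
    using comp.IH(1) by blast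
  have "\<forall>h\<in>set gs. \<exists>p. computes n h p"
    using comp.IH(2) by blast
  from list_all2_choice[OF this] obtain ps where ps: "list_all2 (\<lambda>h p. computes n h p) gs ps"
    by blast
  have "computes n (\<lambda>xs. if \<forall>h\<in>set gs. h xs \<noteq> None then g (map (\<lambda>h. the (h xs)) gs) else None) (Comp pg ps)"
    unfolding computes_def eval_Comp using computes_comp_args[OF ps] pg comp.hyps(2)
    by (auto simp: computes_def)
  then show ?case ..
next
  case (prim_rec n g h)
  obtain pg ph where pg: "computes n g pg" and ph: "computes (n + 2) h ph"
    using prim_rec.IH by blast
  have "computes (Suc n) (\<lambda>xs. prec g h (hd xs) (tl xs)) (Prec pg ph)"
    unfolding computes_def eval_Prec
    by (auto simp: hd0_def length_Suc_conv prec_eq_Some_iff[OF pg ph])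
  then show ?case ..
next
  case (minim n g)
  obtain pg where pg: "computes (Suc n) g pg"
    using minim.IH by blast
  then have "computes n (mu g) (Mu pg)"
    unfolding computes_def eval_Mu mu_eq_Some_iff by auto
  then show ?case ..
qed

section \<open>A stack machine for programs\<close>

datatype frame =
    CompF prog "prog list" "nat list" "nat list"
  | PrecF prog nat nat "nat list"
  | MuF prog nat "nat list"

datatype state = Call prog "nat list" "frame list" | Ret nat "frame list"

fun step :: "state \<Rightarrow> state" where
  "step (Call Zero xs K) = Ret 0 K"
| "step (Call Succ xs K) = Ret (Suc (hd0 xs)) K"
| "step (Call (Proj i) xs K) = Ret (nth0 i xs) K"
| "step (Call (Comp g []) xs K) = Call g [] K"
| "step (Call (Comp g (h # hs)) xs K) = Call h xs (CompF g hs xs [] # K)"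
| "step (Call (Prec g h) xs K) = Call g (tl xs) (PrecF h 0 (hd0 xs) (tl xs) # K)"
| "step (Call (Mu g) xs K) = Call g (0 # xs) (MuF g 0 xs # K)"
| "step (Ret r []) = Ret r []"
| "step (Ret r (CompF g [] xs acc # K)) = Call g (rev (r # acc)) K"
| "step (Ret r (CompF g (h # hs) xs acc # K)) = Call h xs (CompF g hs xs (r # acc) # K)"
| "step (Ret r (PrecF h k n ys # K)) =
     (if k = n then Ret r K else Call h (k # r # ys) (PrecF h (Suc k) n ys # K))"
| "step (Ret r (MuF g k xs # K)) =
     (if r = 0 then Ret k K else Call g (Suc k # xs) (MuF g (Suc k) xs # K))"

definition reaches :: "state \<Rightarrow> state \<Rightarrow> bool" where
  "reaches s t \<longleftrightarrow> (\<exists>n. (step ^^ n) s = t)"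

lemma reaches_refl: "reaches s s"
  unfolding reaches_def by (rule exI[of _ 0]) simp

lemma reaches_step: "reaches (step s) t \<Longrightarrow> reaches s t"
  unfolding reaches_def by (metis funpow_Suc_right o_apply)

lemma reaches_trans: "reaches s t \<Longrightarrow> reaches t u \<Longrightarrow> reaches s u"
  unfolding reaches_def by (metis funpow_add o_apply)

lemma reaches_CompF:
  assumes "list_all2 (\<lambda>h r. \<forall>K. reaches (Call h xs K) (Ret r K)) hs rs"
  shows "reaches (Ret r0 (CompF g hs xs acc # K)) (Call g (rev acc @ r0 # rs) K)"
  using assms
proof (induction arbitrary: r0 acc rule: list_all2_induct)
  case Nil
  show ?case
    by (rule reaches_step) (simp add: reaches_refl)
next
  case (Cons h hs r rs)
  have "reaches (Call h xs (CompF g hs xs (r0 # acc) # K)) (Ret r (CompF g hs xs (r0 # acc) # K))"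
    using Cons.hyps(1) by blast
  moreover have "reaches (Ret r (CompF g hs xs (r0 # acc) # K)) (Call g (rev acc @ r0 # r # rs) K)"
    using Cons.IH[of r "r0 # acc"] by simp
  ultimately have "reaches (Call h xs (CompF g hs xs (r0 # acc) # K)) (Call g (rev acc @ r0 # r # rs) K)"
    by (rule reaches_trans)
  then show ?case
    by - (rule reaches_step, simp)
qed

lemma reaches_Comp:
  assumes args: "list_all2 (\<lambda>h r. \<forall>K. reaches (Call h xs K) (Ret r K)) hs rs"
    and g: "\<forall>K. reaches (Call g rs K) (Ret r K)"
  shows "reaches (Call (Comp g hs) xs K) (Ret r K)"
proof (cases hs)
  case Nil
  then show ?thesis
    using args g by - (rule reaches_step, simp)
next
  case (Cons h hs')
  then obtain r1 rs' where rs: "rs = r1 # rs'" and "\<forall>K. reaches (Call h xs K) (Ret r1 K)"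
    and "list_all2 (\<lambda>h r. \<forall>K. reaches (Call h xs K) (Ret r K)) hs' rs'"
    using args by (auto simp: list_all2_Cons1)
  then have "reaches (Call h xs (CompF g hs' xs [] # K)) (Call g (r1 # rs') K)"
    using reaches_CompF[of xs hs' rs' r1 g "[]" K] reaches_trans by auto
  then have "reaches (Call h xs (CompF g hs' xs [] # K)) (Ret r K)"
    using g rs reaches_trans by blast
  then show ?thesis
    unfolding Cons by - (rule reaches_step, simp)
qed

lemma reaches_MuF:
  assumes "\<forall>j<k. \<exists>v. \<forall>K. reaches (Call g (j # xs) K) (Ret (Suc v) K)" and "j \<le> k"
  shows "reaches (Call g (0 # xs) (MuF g 0 xs # K)) (Call g (j # xs) (MuF g j xs # K))"
  using \<open>j \<le> k\<close>
proof (induction j)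
  case (Suc j)
  then obtain v where v: "\<forall>K. reaches (Call g (j # xs) K) (Ret (Suc v) K)"
    using assms(1) by (meson Suc_le_lessD)
  have "reaches (Call g (j # xs) (MuF g j xs # K)) (Call g (Suc j # xs) (MuF g (Suc j) xs # K))"
    by (rule reaches_trans[OF v[rule_format]], rule reaches_step) (simp add: reaches_refl)
  then show ?case
    using Suc by (meson Suc_leD reaches_trans)
qed (rule reaches_refl)

lemma eval_reaches:
  "eval p xs r \<Longrightarrow> \<forall>K. reaches (Call p xs K) (Ret r K)"
  "eval_prec g h k ys r \<Longrightarrow>
     \<forall>n K. k \<le> n \<longrightarrow> reaches (Call g ys (PrecF h 0 n ys # K)) (Ret r (PrecF h k n ys # K))"
proof (induction rule: eval_eval_prec.inducts)
  case (eval_ZeroI xs)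
  show ?case
    by (intro allI, rule reaches_step) (simp add: reaches_refl)
next
  case (eval_SuccI xs)
  show ?case
    by (intro allI, rule reaches_step) (simp add: reaches_refl)
next
  case (eval_ProjI i xs)
  show ?case
    by (intro allI, rule reaches_step) (simp add: reaches_refl)
next
  case (eval_CompI xs hs rs g r)
  have args: "list_all2 (\<lambda>h r. \<forall>K. reaches (Call h xs K) (Ret r K)) hs rs"
    using eval_CompI.IH(1) by (rule list_all2_mono) simp
  then show ?case
    using eval_CompI.IH(2) reaches_Comp by blast
next
  case (eval_PrecI g h xs r)
  show ?case
  proof
    fix K
    have "reaches (Call g (tl xs) (PrecF h 0 (hd0 xs) (tl xs) # K)) (Ret r (PrecF h (hd0 xs) (hd0 xs) (tl xs) # K))"
      using eval_PrecI.IH by blast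
    moreover have "reaches (Ret r (PrecF h (hd0 xs) (hd0 xs) (tl xs) # K)) (Ret r K)"
      by (rule reaches_step) (simp add: reaches_refl)
    ultimately show "reaches (Call (Prec g h) xs K) (Ret r K)"
      by - (rule reaches_step, simp add: reaches_trans)
  qed
next
  case (eval_MuI g k xs)
  have below: "\<forall>j<k. \<exists>v. \<forall>K. reaches (Call g (j # xs) K) (Ret (Suc v) K)"
    using eval_MuI.IH(2) by blast
  show ?case
  proof
    fix K
    have "reaches (Call g (0 # xs) (MuF g 0 xs # K)) (Ret 0 (MuF g k xs # K))"
      using reaches_trans[OF reaches_MuF[OF below order_refl]] eval_MuI.IH(1) by blast
    moreover have "reaches (Ret 0 (MuF g k xs # K)) (Ret k K)"
      by (rule reaches_step) (simp add: reaches_refl)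
    ultimately show "reaches (Call (Mu g) xs K) (Ret k K)"
      by - (rule reaches_step, simp add: reaches_trans)
  qed
next
  case (eval_prec_SucI g h k ys r0 r)
  show ?case
  proof (intro allI impI)
    fix n K assume "Suc k \<le> n"
    have "reaches (Ret r0 (PrecF h k n ys # K)) (Ret r (PrecF h (Suc k) n ys # K))"
      using \<open>Suc k \<le> n\<close> eval_prec_SucI.IH(2) by - (rule reaches_step, simp)
    then show "reaches (Call g ys (PrecF h 0 n ys # K)) (Ret r (PrecF h (Suc k) n ys # K))"
      using eval_prec_SucI.IH(1) \<open>Suc k \<le> n\<close> by (meson Suc_leD reaches_trans)
  qed
next
  case (eval_prec_0I g ys r h)
  then show ?case
    by simp
qed

text \<open>
  \<open>returns K v r\<close>: returning \<open>v\<close> into the frame stack \<open>K\<close> eventually halts with \<open>r\<close>. The machine step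
  reflects \<open>halts_with\<close>, which gives soundness by induction on the number of steps.
\<close>

inductive prec_cont :: "prog \<Rightarrow> nat \<Rightarrow> nat list \<Rightarrow> nat \<Rightarrow> nat \<Rightarrow> nat \<Rightarrow> bool" for h n ys where
  prec_cont_stop: "prec_cont h n ys n v v"
| prec_cont_next: "k \<noteq> n \<Longrightarrow> eval h (k # v # ys) v' \<Longrightarrow> prec_cont h n ys (Suc k) v' w \<Longrightarrow> prec_cont h n ys k v w"

inductive mu_cont :: "prog \<Rightarrow> nat list \<Rightarrow> nat \<Rightarrow> nat \<Rightarrow> nat \<Rightarrow> bool" for g xs where
  mu_cont_stop: "mu_cont g xs k 0 k"
| mu_cont_next: "eval g (Suc k # xs) v' \<Longrightarrow> mu_cont g xs (Suc k) v' m \<Longrightarrow> mu_cont g xs k (Suc v) m"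

inductive returns :: "frame list \<Rightarrow> nat \<Rightarrow> nat \<Rightarrow> bool" where
  returns_Nil: "returns [] r r"
| returns_CompF: "list_all2 (\<lambda>h r. eval h xs r) hs rs \<Longrightarrow> eval g (rev acc @ v # rs) w \<Longrightarrow> returns K w r \<Longrightarrow>
    returns (CompF g hs xs acc # K) v r"
| returns_PrecF: "prec_cont h n ys k v w \<Longrightarrow> returns K w r \<Longrightarrow> returns (PrecF h k n ys # K) v r"
| returns_MuF: "mu_cont g xs k v m \<Longrightarrow> returns K m r \<Longrightarrow> returns (MuF g k xs # K) v r"

inductive_simps returns_Nil_iff: "returns [] v r"
  and returns_CompF_iff: "returns (CompF g hs xs acc # K) v r"
  and returns_PrecF_iff: "returns (PrecF h k n ys # K) v r"
  and returns_MuF_iff: "returns (MuF g k xs # K) v r"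

fun halts_with :: "state \<Rightarrow> nat \<Rightarrow> bool" where
  "halts_with (Call p xs K) r \<longleftrightarrow> (\<exists>v. eval p xs v \<and> returns K v r)"
| "halts_with (Ret v K) r \<longleftrightarrow> returns K v r"

lemma prec_cont_eval_prec:
  "prec_cont h n ys k v w \<Longrightarrow> eval_prec g h k ys v \<Longrightarrow> eval_prec g h n ys w"
  by (induction rule: prec_cont.induct) (auto intro: eval_prec_SucI)

lemma mu_cont_eval_Mu:
  "mu_cont g xs k v m \<Longrightarrow> \<forall>j<k. \<exists>u. eval g (j # xs) (Suc u) \<Longrightarrow> eval g (k # xs) v \<Longrightarrow> eval (Mu g) xs m"
proof (induction rule: mu_cont.induct)
  case (mu_cont_stop k)
  then show ?case
    by (simp add: eval_Mu)
next
  case (mu_cont_next k v' m v)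
  then have "\<forall>j<Suc k. \<exists>u. eval g (j # xs) (Suc u)"
    using less_Suc_eq by auto
  then show ?case
    using mu_cont_next.IH mu_cont_next.hyps(1) by blast
qed

lemma halts_with_step: "halts_with (step s) r \<Longrightarrow> halts_with s r"
proof (induction s rule: step.induct)
  case (5 g h hs xs K)
  then show ?case
    by (auto simp: returns_CompF_iff eval_Comp)
next
  case (6 g h xs K)
  then show ?case
    by (auto simp: returns_PrecF_iff eval_Prec) (meson eval_prec_0I prec_cont_eval_prec)
next
  case (7 g xs K)
  then show ?case
    by (auto simp: returns_MuF_iff intro: mu_cont_eval_Mu)
next
  case (10 r g h hs xs acc K)
  then show ?case
    by (auto simp: returns_CompF_iff)
next
  case (11 r h k n ys K)
  then show ?case
    by (auto simp: returns_PrecF_iff split: if_splits intro: prec_cont.intros)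
next
  case (12 r g k xs K)
  then show ?case
    by (cases r) (auto simp: returns_MuF_iff split: if_splits intro: mu_cont.intros)
qed (auto simp: returns_CompF_iff eval_Zero eval_Succ eval_Proj eval_Comp)

lemma halts_with_funpow: "(step ^^ n) s = Ret r [] \<Longrightarrow> halts_with s r"
proof (induction n arbitrary: s)
  case 0
  then show ?case
    by (simp add: returns_Nil)
next
  case (Suc n)
  then show ?case
    by (metis funpow_Suc_right o_apply halts_with_step)
qed

theorem eval_iff_halts: "eval p xs r \<longleftrightarrow> (\<exists>n. (step ^^ n) (Call p xs []) = Ret r [])"
proof
  assume "eval p xs r"
  then show "\<exists>n. (step ^^ n) (Call p xs []) = Ret r []"
    using eval_reaches(1) unfolding reaches_def by blast
next
  assume "\<exists>n. (step ^^ n) (Call p xs []) = Ret r []"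
  then have "halts_with (Call p xs []) r"
    using halts_with_funpow by blast
  then show "eval p xs r"
    by (auto simp: returns_Nil_iff)
qed

section \<open>Arithmetization of the machine\<close>

definition ncons :: "nat \<Rightarrow> nat \<Rightarrow> nat" where
  "ncons h t = Suc (npair h t)"

definition nhd :: "nat \<Rightarrow> nat" where
  "nhd L = nfst (L - 1)"

definition ntl :: "nat \<Rightarrow> nat" where
  "ntl L = nsnd (L - 1)"

definition nnth :: "nat \<Rightarrow> nat \<Rightarrow> nat" where
  "nnth i L = nhd ((ntl ^^ i) L)"

lemma ncons_neq_0 [simp]: "ncons a b \<noteq> 0"
  unfolding ncons_def by simp

lemma nhd_ncons [simp]: "nhd (ncons a b) = a"
  and ntl_ncons [simp]: "ntl (ncons a b) = b"
  unfolding ncons_def nhd_def ntl_def by simp_all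

lemma nhd_0 [simp]: "nhd 0 = 0"
  and ntl_0 [simp]: "ntl 0 = 0"
  using nfst_npair[of 0 0] nsnd_npair[of 0 0] unfolding nhd_def ntl_def npair_0_0 by simp_all

lemma list_encode_Cons [simp]: "list_encode (x # xs) = ncons x (list_encode xs)"
  unfolding ncons_def npair_def by simp

declare list_encode.simps(2) [simp del]

lemma list_encode_eq_0_iff [simp]: "list_encode xs = 0 \<longleftrightarrow> xs = []"
  by (cases xs) auto

lemma nhd_list_encode [simp]: "nhd (list_encode xs) = hd0 xs"
  by (cases xs) (auto simp: hd0_def)

lemma ntl_list_encode [simp]: "ntl (list_encode xs) = list_encode (tl xs)"
  by (cases xs) auto

lemma nnth_list_encode [simp]: "nnth i (list_encode xs) = nth0 i xs"
proof (induction i arbitrary: xs)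
  case 0
  then show ?case
    by (cases xs) (auto simp: nnth_def nth0_def hd0_def)
next
  case (Suc i)
  have "nnth (Suc i) (list_encode xs) = nnth i (list_encode (tl xs))"
    unfolding nnth_def by (simp add: funpow_Suc_right del: funpow.simps)
  also have "\<dots> = nth0 i (tl xs)"
    by (rule Suc.IH)
  also have "\<dots> = nth0 (Suc i) xs"
    by (cases xs) (auto simp: nth0_def)
  finally show ?case .
qed

definition nrev_step :: "nat \<Rightarrow> nat" where
  "nrev_step p = (if nfst p = 0 then p else npair (ntl (nfst p)) (ncons (nhd (nfst p)) (nsnd p)))"

text \<open>A list code bounds the length of the list, so that many reversal steps suffice.\<close>

definition nrev :: "nat \<Rightarrow> nat" where
  "nrev L = nsnd ((nrev_step ^^ L) (npair L 0))"

lemma length_le_list_encode: "length xs \<le> list_encode xs"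
proof (induction xs)
  case (Cons x xs)
  have "list_encode xs \<le> npair x (list_encode xs)"
    unfolding npair_def by (rule le_prod_encode_2)
  then show ?case
    using Cons by (simp add: ncons_def)
qed simp

lemma funpow_nrev_step:
  "length xs \<le> k \<Longrightarrow>
   (nrev_step ^^ k) (npair (list_encode xs) (list_encode ys)) = npair 0 (list_encode (rev xs @ ys))"
proof (induction xs arbitrary: k ys)
  case Nil
  have "(nrev_step ^^ k) (npair 0 b) = npair 0 b" for b
    by (induction k) (auto simp: nrev_step_def)
  then show ?case
    by (simp add: npair_0_0)
next
  case (Cons x xs)
  then obtain k' where k: "k = Suc k'"
    by (cases k) auto
  have "(nrev_step ^^ k) (npair (list_encode (x # xs)) (list_encode ys)) =
        (nrev_step ^^ k') (npair (list_encode xs) (list_encode (x # ys)))"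
    unfolding k by (simp add: funpow_Suc_right nrev_step_def del: funpow.simps)
  also have "\<dots> = npair 0 (list_encode (rev xs @ x # ys))"
    using Cons.IH[of k' "x # ys"] Cons.prems k by simp
  finally show ?case
    by simp
qed

lemma nrev_list_encode [simp]: "nrev (list_encode xs) = list_encode (rev xs)"
  unfolding nrev_def using funpow_nrev_step[OF length_le_list_encode, of xs "[]"] by simp

lemma nrev_ncons [simp]: "nrev (ncons r (list_encode acc)) = list_encode (rev acc @ [r])"
  using nrev_list_encode[of "r # acc"] by simp

lemma totalrec1_ncons: "totalrec1 f \<Longrightarrow> totalrec1 g \<Longrightarrow> totalrec1 (\<lambda>x. ncons (f x) (g x))"
  unfolding ncons_def by (intro totalrec1_Suc totalrec1_npair)

lemma totalrec1_nhd: "totalrec1 f \<Longrightarrow> totalrec1 (\<lambda>x. nhd (f x))"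
  unfolding nhd_def by (intro totalrec1_nfst totalrec1_diff totalrec1_const)

lemma totalrec1_ntl: "totalrec1 f \<Longrightarrow> totalrec1 (\<lambda>x. ntl (f x))"
  unfolding ntl_def by (intro totalrec1_nsnd totalrec1_diff totalrec1_const)

lemma totalrec1_nnth: "totalrec1 f \<Longrightarrow> totalrec1 g \<Longrightarrow> totalrec1 (\<lambda>x. nnth (f x) (g x))"
  unfolding nnth_def using totalrec1_ntl[OF totalrec1_id] by (intro totalrec1_nhd totalrec1_funpow) simp_all

lemma totalrec1_nrev: "totalrec1 f \<Longrightarrow> totalrec1 (\<lambda>x. nrev (f x))"
proof -
  have "totalrec1 nrev_step"
    unfolding nrev_step_def
    by (intro totalrec1_if totalrec1_nfst totalrec1_id totalrec1_const totalrec1_npair totalrec1_ntl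
        totalrec1_ncons totalrec1_nhd totalrec1_nsnd)
  then show "totalrec1 f \<Longrightarrow> totalrec1 (\<lambda>x. nrev (f x))"
    unfolding nrev_def by (intro totalrec1_nsnd totalrec1_funpow totalrec1_npair totalrec1_const)
qed

fun prog_code :: "prog \<Rightarrow> nat" where
  "prog_code Zero = npair 0 0"
| "prog_code Succ = npair 1 0"
| "prog_code (Proj i) = npair 2 i"
| "prog_code (Comp g hs) = npair 3 (npair (prog_code g) (list_encode (map prog_code hs)))"
| "prog_code (Prec g h) = npair 4 (npair (prog_code g) (prog_code h))"
| "prog_code (Mu g) = npair 5 (prog_code g)"

fun frame_code :: "frame \<Rightarrow> nat" where
  "frame_code (CompF g hs xs acc) =
     npair 0 (npair (prog_code g) (npair (list_encode (map prog_code hs)) (npair (list_encode xs) (list_encode acc))))"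
| "frame_code (PrecF h k n ys) = npair 1 (npair (prog_code h) (npair k (npair n (list_encode ys))))"
| "frame_code (MuF g k xs) = npair 2 (npair (prog_code g) (npair k (list_encode xs)))"

fun state_code :: "state \<Rightarrow> nat" where
  "state_code (Call p xs K) = npair 0 (npair (prog_code p) (npair (list_encode xs) (list_encode (map frame_code K))))"
| "state_code (Ret r K) = npair 1 (npair r (list_encode (map frame_code K)))"

definition call_step_code :: "nat \<Rightarrow> nat" where
  "call_step_code q = (let tag = nfst (nfst q); a = nsnd (nfst q); xs = nfst (nsnd q); K = nsnd (nsnd q) in
     if tag = 0 then npair 1 (npair 0 K)
     else if tag = 1 then npair 1 (npair (Suc (nhd xs)) K)
     else if tag = 2 then npair 1 (npair (nnth a xs) K)
     else if tag = 3 then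
       (if nsnd a = 0 then npair 0 (npair (nfst a) (npair 0 K))
        else npair 0 (npair (nhd (nsnd a)) (npair xs
          (ncons (npair 0 (npair (nfst a) (npair (ntl (nsnd a)) (npair xs 0)))) K))))
     else if tag = 4 then
       npair 0 (npair (nfst a) (npair (ntl xs)
         (ncons (npair 1 (npair (nsnd a) (npair 0 (npair (nhd xs) (ntl xs))))) K)))
     else npair 0 (npair a (npair (ncons 0 xs) (ncons (npair 2 (npair a (npair 0 xs))) K))))"

definition ret_step_code :: "nat \<Rightarrow> nat" where
  "ret_step_code q = (let r = nfst q; K = nsnd q; K' = ntl K; tag = nfst (nhd K); a = nsnd (nhd K) in
    if K = 0 then npair 1 q
    else if tag = 0 then
      (if nfst (nsnd a) = 0 then npair 0 (npair (nfst a) (npair (nrev (ncons r (nsnd (nsnd (nsnd a))))) K'))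
       else npair 0 (npair (nhd (nfst (nsnd a))) (npair (nfst (nsnd (nsnd a)))
          (ncons (npair 0 (npair (nfst a) (npair (ntl (nfst (nsnd a)))
            (npair (nfst (nsnd (nsnd a))) (ncons r (nsnd (nsnd (nsnd a)))))))) K'))))
    else if tag = 1 then
      (if nfst (nsnd a) = nfst (nsnd (nsnd a)) then npair 1 (npair r K')
       else npair 0 (npair (nfst a) (npair (ncons (nfst (nsnd a)) (ncons r (nsnd (nsnd (nsnd a)))))
          (ncons (npair 1 (npair (nfst a) (npair (Suc (nfst (nsnd a)))
            (npair (nfst (nsnd (nsnd a))) (nsnd (nsnd (nsnd a))))))) K'))))
    else
      (if r = 0 then npair 1 (npair (nfst (nsnd a)) K')
       else npair 0 (npair (nfst a) (npair (ncons (Suc (nfst (nsnd a))) (nsnd (nsnd a)))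
          (ncons (npair 2 (npair (nfst a) (npair (Suc (nfst (nsnd a))) (nsnd (nsnd a))))) K')))))"

definition step_code :: "nat \<Rightarrow> nat" where
  "step_code s = (if nfst s = 0 then call_step_code (nsnd s) else ret_step_code (nsnd s))"

definition init_code :: "nat \<Rightarrow> nat \<Rightarrow> nat" where
  "init_code c z = npair 0 (npair c (npair (ncons z 0) 0))"

lemma step_code_state_code: "step_code (state_code s) = state_code (step s)"
  by (induction s rule: step.induct) (simp_all add: step_code_def call_step_code_def ret_step_code_def Let_def)

lemma funpow_step_code: "(step_code ^^ k) (state_code s) = state_code ((step ^^ k) s)"
  by (induction k) (auto simp: step_code_state_code)

lemma init_code_prog_code: "init_code (prog_code p) z = state_code (Call p [z] [])"
  unfolding init_code_def by simp

lemma state_code_eq_halted_iff: "state_code s = npair 1 (npair v 0) \<longleftrightarrow> s = Ret v []"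
  by (cases s) auto

lemma totalrec1_step_code: "totalrec1 step_code"
proof -
  have call: "totalrec1 call_step_code"
    unfolding call_step_code_def Let_def
    by (intro totalrec1_if totalrec1_nfst totalrec1_nsnd totalrec1_id totalrec1_const totalrec1_npair
        totalrec1_Suc totalrec1_nhd totalrec1_ntl totalrec1_ncons totalrec1_nnth)
  have ret: "totalrec1 ret_step_code"
    unfolding ret_step_code_def Let_def
    by (intro totalrec1_if totalrec1_nfst totalrec1_nsnd totalrec1_id totalrec1_const totalrec1_npair
        totalrec1_Suc totalrec1_nhd totalrec1_ntl totalrec1_ncons totalrec1_nrev)
  show ?thesis
    unfolding step_code_def
    by (intro totalrec1_if totalrec1_nfst totalrec1_nsnd totalrec1_id totalrec1_const
        totalrec1_comp[OF call] totalrec1_comp[OF ret])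
qed

lemma totalrec1_run:
  "totalrec1 k \<Longrightarrow> totalrec1 c \<Longrightarrow> totalrec1 z \<Longrightarrow> totalrec1 (\<lambda>x. (step_code ^^ k x) (init_code (c x) (z x)))"
  unfolding init_code_def
  by (intro totalrec1_funpow totalrec1_step_code totalrec1_npair totalrec1_const totalrec1_ncons)

theorem precfn_normal_form:
  assumes "precfn 1 F"
  shows "\<exists>c. \<forall>z v. F [z] = Some v \<longleftrightarrow> (\<exists>k. (step_code ^^ k) (init_code c z) = npair 1 (npair v 0))"
proof -
  obtain p where p: "computes 1 F p"
    using precfn_computed[OF assms] by blast
  have "F [z] = Some v \<longleftrightarrow> (\<exists>k. (step_code ^^ k) (init_code (prog_code p) z) = npair 1 (npair v 0))" for z v
  proof -
    have "F [z] = Some v \<longleftrightarrow> eval p [z] v"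
      using p unfolding computes_def by simp
    also have "\<dots> \<longleftrightarrow> (\<exists>k. (step ^^ k) (Call p [z] []) = Ret v [])"
      by (rule eval_iff_halts)
    finally show ?thesis
      unfolding init_code_prog_code funpow_step_code state_code_eq_halted_iff .
  qed
  then show ?thesis
    by blast
qed

section \<open>Running maxima of an enumeration\<close>

datatype 'a peak = NoPeak | Clash | Peak 'a

definition peak_update :: "('a \<Rightarrow> 'a \<Rightarrow> bool) \<Rightarrow> 'a peak \<Rightarrow> 'a option \<Rightarrow> 'a peak" where
  "peak_update lt p w = (case w of None \<Rightarrow> p | Some v \<Rightarrow> (case p of NoPeak \<Rightarrow> Peak v | Clash \<Rightarrow> Clash
     | Peak m \<Rightarrow> if v = m \<or> lt m v then Peak v else if lt v m then Peak m else Clash))"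

fun prefix_peak :: "('a \<Rightarrow> 'a \<Rightarrow> bool) \<Rightarrow> (nat \<Rightarrow> 'a option) \<Rightarrow> nat \<Rightarrow> 'a peak" where
  "prefix_peak lt w 0 = NoPeak"
| "prefix_peak lt w (Suc i) = peak_update lt (prefix_peak lt w i) (w i)"

definition running_peak :: "('a \<Rightarrow> 'a \<Rightarrow> bool) \<Rightarrow> (nat \<Rightarrow> 'a option) \<Rightarrow> nat \<Rightarrow> 'a option" where
  "running_peak lt w t = (case prefix_peak lt w (Suc t) of Peak m \<Rightarrow> Some m | _ \<Rightarrow> None)"

definition max_elem :: "('a \<Rightarrow> 'a \<Rightarrow> bool) \<Rightarrow> 'a set \<Rightarrow> 'a option" where
  "max_elem lt S = (if finite S \<and> S \<noteq> {} then Some (THE m. m \<in> S \<and> (\<forall>s\<in>S. s = m \<or> lt s m)) else None)"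

lemma maxD_eq_max_elem: "maxD lt f y = max_elem lt (ran (f y))"
  unfolding maxD_def max_elem_def ran_def Let_def ..

lemma running_peak_eq_Some_iff: "running_peak lt w t = Some a \<longleftrightarrow> prefix_peak lt w (Suc t) = Peak a"
  unfolding running_peak_def by (cases "prefix_peak lt w (Suc t)") simp_all

locale strict_order =
  fixes lt :: "'a \<Rightarrow> 'a \<Rightarrow> bool"
  assumes irrefl: "\<not> lt a a" and trans: "lt a b \<Longrightarrow> lt b c \<Longrightarrow> lt a c"
begin

definition leq :: "'a \<Rightarrow> 'a \<Rightarrow> bool" where
  "leq a b \<longleftrightarrow> a = b \<or> lt a b"

definition chain :: "'a set \<Rightarrow> bool" where
  "chain S \<longleftrightarrow> (\<forall>a\<in>S. \<forall>b\<in>S. leq a b \<or> leq b a)"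

definition mono_seq :: "(nat \<Rightarrow> 'a option) \<Rightarrow> bool" where
  "mono_seq f \<longleftrightarrow> (\<forall>s s' a b. s \<le> s' \<longrightarrow> f s = Some a \<longrightarrow> f s' = Some b \<longrightarrow> leq a b)"

lemma leq_refl: "leq a a"
  unfolding leq_def by simp

lemma leq_trans: "leq a b \<Longrightarrow> leq b c \<Longrightarrow> leq a c"
  unfolding leq_def using trans by blast

lemma leq_antisym: "leq a b \<Longrightarrow> leq b a \<Longrightarrow> a = b"
  unfolding leq_def using trans irrefl by blast

lemma max_elem_eq_Some:
  assumes "finite S" "m \<in> S" "\<forall>s\<in>S. leq s m"
  shows "max_elem lt S = Some m"
proof -
  have "(THE m. m \<in> S \<and> (\<forall>s\<in>S. s = m \<or> lt s m)) = m"
  proof (rule the_equality)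
    show "m \<in> S \<and> (\<forall>s\<in>S. s = m \<or> lt s m)"
      using assms(2,3) unfolding leq_def by blast
  next
    fix m' assume m': "m' \<in> S \<and> (\<forall>s\<in>S. s = m' \<or> lt s m')"
    then have "leq m m'" and "leq m' m"
      using assms(2,3) unfolding leq_def by auto
    then show "m' = m"
      by (rule leq_antisym[THEN sym])
  qed
  then show ?thesis
    using assms unfolding max_elem_def by auto
qed

lemma finite_chain_has_max:
  assumes "finite S" "S \<noteq> {}" "chain S"
  shows "\<exists>m\<in>S. \<forall>s\<in>S. leq s m"
  using assms
proof (induction S rule: finite_ne_induct)
  case (insert x F)
  then obtain m where m: "m \<in> F" "\<forall>s\<in>F. leq s m"
    unfolding chain_def by auto
  have "leq x m \<or> leq m x"
    using insert.prems m(1) unfolding chain_def by auto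
  then show ?case
  proof
    assume "leq x m"
    then show ?case
      using m by auto
  next
    assume "leq m x"
    then have "\<forall>s\<in>insert x F. leq s x"
      using m(2) leq_trans leq_refl by blast
    then show ?case
      by blast
  qed
qed (simp add: leq_refl)

lemma mono_seq_chain:
  assumes "mono_seq f"
  shows "chain (ran f)"
  unfolding chain_def
proof (intro ballI)
  fix a b assume "a \<in> ran f" "b \<in> ran f"
  then obtain s s' where "f s = Some a" "f s' = Some b"
    unfolding ran_def by blast
  then show "leq a b \<or> leq b a"
    using assms nat_le_linear[of s s'] unfolding mono_seq_def by blast
qed

lemma mono_seq_finite_ran:
  assumes "mono_seq f" "f s0 = Some M" "\<forall>a\<in>ran f. leq a M"
  shows "finite (ran f)"
proof -
  have "ran f \<subseteq> insert M ((\<lambda>s. the (f s)) ` {..<s0})"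
  proof
    fix a assume "a \<in> ran f"
    then obtain s where s: "f s = Some a"
      unfolding ran_def by blast
    show "a \<in> insert M ((\<lambda>s. the (f s)) ` {..<s0})"
    proof (cases "s < s0")
      case False
      then have "leq M a"
        using assms(1,2) s unfolding mono_seq_def by (meson not_less)
      then show ?thesis
        using assms(3) \<open>a \<in> ran f\<close> leq_antisym by blast
    qed (use s in force)
  qed
  then show ?thesis
    by (rule finite_subset) simp
qed

lemma peak_update_Peak:
  "peak_update lt (Peak a) v = Clash \<or> (\<exists>b. peak_update lt (Peak a) v = Peak b \<and> leq a b)"
  unfolding peak_update_def leq_def by (auto split: option.splits)

lemma prefix_peak_mono:
  "i \<le> j \<Longrightarrow> prefix_peak lt w i = Peak a \<Longrightarrow> prefix_peak lt w j = Clash \<or> (\<exists>b. prefix_peak lt w j = Peak b \<and> leq a b)"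
proof (induction j)
  case 0
  then show ?case
    by (simp add: leq_refl)
next
  case (Suc j)
  show ?case
  proof (cases "i = Suc j")
    case False
    then have "prefix_peak lt w j = Clash \<or> (\<exists>b. prefix_peak lt w j = Peak b \<and> leq a b)"
      using Suc by simp
    then show ?thesis
    proof
      assume "prefix_peak lt w j = Clash"
      then show ?thesis
        by (simp add: peak_update_def split: option.splits)
    next
      assume "\<exists>b. prefix_peak lt w j = Peak b \<and> leq a b"
      then obtain b where "prefix_peak lt w j = Peak b" "leq a b"
        by blast
      then show ?thesis
        using peak_update_Peak[of b "w j"] leq_trans by auto
    qed
  qed (use Suc.prems in \<open>simp add: leq_refl\<close>)
qed

lemma running_peak_mono: "mono_seq (running_peak lt w)"
  unfolding mono_seq_def running_peak_eq_Some_iff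
proof (intro allI impI)
  fix s s' a b
  assume "s \<le> s'" "prefix_peak lt w (Suc s) = Peak a" "prefix_peak lt w (Suc s') = Peak b"
  then show "leq a b"
    using prefix_peak_mono[of "Suc s" "Suc s'" w a] by auto
qed

lemma prefix_peak_chain:
  assumes "chain (ran w)"
  shows "(prefix_peak lt w i = NoPeak \<and> (\<forall>j<i. w j = None)) \<or>
         (\<exists>m. prefix_peak lt w i = Peak m \<and> m \<in> ran w \<and> (\<forall>j<i. \<forall>v. w j = Some v \<longrightarrow> leq v m))"
proof (induction i)
  case (Suc i)
  show ?case
  proof (cases "w i")
    case (Some v)
    then have v: "v \<in> ran w"
      unfolding ran_def by blast
    from Suc show ?thesis
    proof
      assume "prefix_peak lt w i = NoPeak \<and> (\<forall>j<i. w j = None)"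
      then show ?thesis
        using Some v by (auto simp: peak_update_def less_Suc_eq leq_refl)
    next
      assume "\<exists>m. prefix_peak lt w i = Peak m \<and> m \<in> ran w \<and> (\<forall>j<i. \<forall>v. w j = Some v \<longrightarrow> leq v m)"
      then obtain m where m: "prefix_peak lt w i = Peak m" "m \<in> ran w" "\<forall>j<i. \<forall>u. w j = Some u \<longrightarrow> leq u m"
        by blast
      have "leq v m \<or> leq m v"
        using assms v m(2) unfolding chain_def by blast
      then show ?thesis
      proof
        assume "leq m v"
        then have "prefix_peak lt w (Suc i) = Peak v"
          using m(1) Some by (auto simp: peak_update_def leq_def)
        then show ?thesis
          using v m(3) Some \<open>leq m v\<close> leq_trans by (auto simp: less_Suc_eq leq_refl)
      next
        assume "leq v m"
        then have "prefix_peak lt w (Suc i) = Peak m"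
          using m(1) Some irrefl trans by (auto simp: peak_update_def leq_def)
        then show ?thesis
          using m(2,3) Some \<open>leq v m\<close> by (auto simp: less_Suc_eq)
      qed
    qed
  qed (use Suc in \<open>auto simp: peak_update_def less_Suc_eq\<close>)
qed simp

lemma ran_running_peak_subset:
  assumes "chain (ran w)"
  shows "ran (running_peak lt w) \<subseteq> ran w"
proof
  fix a assume "a \<in> ran (running_peak lt w)"
  then obtain t where "prefix_peak lt w (Suc t) = Peak a"
    by (auto simp: ran_def running_peak_eq_Some_iff)
  then show "a \<in> ran w"
    using prefix_peak_chain[OF assms, of "Suc t"] by (auto simp del: prefix_peak.simps)
qed

lemma ran_running_peak_dominates:
  assumes "chain (ran w)" "v \<in> ran w"
  shows "\<exists>m\<in>ran (running_peak lt w). leq v m"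
proof -
  obtain i where "w i = Some v"
    using assms(2) unfolding ran_def by blast
  then obtain m where "prefix_peak lt w (Suc i) = Peak m" "\<forall>j<Suc i. \<forall>u. w j = Some u \<longrightarrow> leq u m"
    using prefix_peak_chain[OF assms(1), of "Suc i"] by (auto simp del: prefix_peak.simps)
  then show ?thesis
    using \<open>w i = Some v\<close> unfolding ran_def running_peak_eq_Some_iff by blast
qed

text \<open>
  The running peak of an enumeration of the values of a monotone sequence has the same maximum as
  the sequence: when the values form a finite set its top is eventually reached, and when they form
  an infinite set the running peak keeps increasing.
\<close>

theorem max_elem_running_peak:
  assumes mono: "mono_seq f" and enum: "ran w = ran f"
  shows "max_elem lt (ran (running_peak lt w)) = max_elem lt (ran f)"
proof -
  let ?P = "ran (running_peak lt w)"
  have chain: "chain (ran w)"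
    using mono_seq_chain[OF mono] enum by simp
  have P_sub: "?P \<subseteq> ran f"
    using ran_running_peak_subset[OF chain] enum by simp
  have P_cover: "\<exists>m\<in>?P. leq v m" if "v \<in> ran f" for v
    using ran_running_peak_dominates[OF chain] that enum by simp
  show ?thesis
  proof (cases "finite (ran f) \<and> ran f \<noteq> {}")
    case True
    then obtain M where M: "M \<in> ran f" "\<forall>s\<in>ran f. leq s M"
      using finite_chain_has_max mono_seq_chain[OF mono] by blast
    then obtain m where m: "m \<in> ?P" "leq M m"
      using P_cover by blast
    then have "leq m M"
      using M(2) P_sub by blast
    then have "M \<in> ?P"
      using m leq_antisym by blast
    then have "max_elem lt ?P = Some M"
      using True M(2) P_sub by (intro max_elem_eq_Some) (auto intro: finite_subset)
    moreover have "max_elem lt (ran f) = Some M"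
      using True M by (intro max_elem_eq_Some) auto
    ultimately show ?thesis
      by simp
  next
    case False
    have "\<not> (finite ?P \<and> ?P \<noteq> {})"
    proof
      assume P: "finite ?P \<and> ?P \<noteq> {}"
      then obtain M where M: "M \<in> ?P" "\<forall>s\<in>?P. leq s M"
        using finite_chain_has_max mono_seq_chain[OF running_peak_mono] by blast
      then obtain s0 where "f s0 = Some M"
        using P_sub unfolding ran_def by blast
      moreover have "\<forall>a\<in>ran f. leq a M"
      proof
        fix a assume "a \<in> ran f"
        then obtain m where "m \<in> ?P" "leq a m"
          using P_cover by blast
        then show "leq a M"
          using M(2) leq_trans by blast
      qed
      ultimately have "finite (ran f)"
        by (rule mono_seq_finite_ran[OF mono])
      moreover have "ran f \<noteq> {}"
        using P P_sub by auto
      ultimately show False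
        using False by simp
    qed
    then show ?thesis
      using False unfolding max_elem_def by auto
  qed
qed

end

section \<open>Computing running peaks of trial runs\<close>

lemma prefix_peak_map:
  assumes "inj \<rho>"
  shows "prefix_peak lt (\<lambda>i. map_option \<rho> (w i)) i = map_peak \<rho> (prefix_peak (\<lambda>a b. lt (\<rho> a) (\<rho> b)) w i)"
proof (induction i)
  case (Suc i)
  have "\<rho> a = \<rho> b \<longleftrightarrow> a = b" for a b
    using assms by (meson injD)
  with Suc show ?case
    by (cases "prefix_peak (\<lambda>a b. lt (\<rho> a) (\<rho> b)) w i"; cases "w i") (auto simp: peak_update_def)
qed simp

lemma running_peak_map:
  assumes "inj \<rho>"
  shows "running_peak lt (\<lambda>i. map_option \<rho> (w i)) t = map_option \<rho> (running_peak (\<lambda>a b. lt (\<rho> a) (\<rho> b)) w t)"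
  unfolding running_peak_def prefix_peak_map[OF assms]
  by (cases "prefix_peak (\<lambda>a b. lt (\<rho> a) (\<rho> b)) w (Suc t)") auto

definition halt_value :: "nat \<Rightarrow> nat option" where
  "halt_value R = (if nfst R = 1 \<and> nsnd (nsnd R) = 0 then Some (nfst (nsnd R)) else None)"

lemma halt_value_eq_Some_iff: "halt_value R = Some v \<longleftrightarrow> R = npair 1 (npair v 0)"
  unfolding halt_value_def by (metis npair_nfst_nsnd nfst_npair nsnd_npair option.distinct(1) option.inject)

definition trial :: "nat \<Rightarrow> bval list \<Rightarrow> nat \<Rightarrow> nat option" where
  "trial c x i = halt_value ((step_code ^^ nsnd i) (init_code c (enc (x @ [VN (nfst i)]))))"

lemma ran_trial:
  assumes "\<forall>z v. F [z] = Some v \<longleftrightarrow> (\<exists>k. (step_code ^^ k) (init_code c z) = npair 1 (npair v 0))"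
  shows "ran (trial c x) = ran (\<lambda>s. F [enc (x @ [VN s])])"
proof -
  have "(\<exists>i. trial c x i = Some v) \<longleftrightarrow> (\<exists>s k. (step_code ^^ k) (init_code c (enc (x @ [VN s]))) = npair 1 (npair v 0))"
    for v
    unfolding trial_def halt_value_eq_Some_iff by (metis nfst_npair nsnd_npair)
  then show ?thesis
    unfolding ran_def using assms by simp
qed

fun peak_code :: "nat peak \<Rightarrow> nat" where
  "peak_code NoPeak = 0"
| "peak_code Clash = 1"
| "peak_code (Peak m) = m + 2"

definition peak_update_code :: "(nat \<Rightarrow> nat) \<Rightarrow> nat \<Rightarrow> nat \<Rightarrow> nat" where
  "peak_update_code ind p v = (if p = 0 then v + 2 else if p = 1 then 1 else if v = p - 2 then v + 2
     else if ind (npair (p - 2) v) = 1 then v + 2 else if ind (npair v (p - 2)) = 1 then p else 1)"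

definition peak_update_halt_code :: "(nat \<Rightarrow> nat) \<Rightarrow> nat \<Rightarrow> nat \<Rightarrow> nat" where
  "peak_update_halt_code ind p R =
     (if nfst R = 1 then (if nsnd (nsnd R) = 0 then peak_update_code ind p (nfst (nsnd R)) else p) else p)"

definition with_last_code :: "nat \<Rightarrow> nat \<Rightarrow> nat" where
  "with_last_code N s = nrev (ncons (npair 0 s) (ntl (nrev N)))"

text \<open>
  The iteration acts on \<open>npair (npair c N) (npair i p)\<close>: program code \<open>c\<close>, input code \<open>N\<close> whose last
  entry is replaced by the time of each trial, trial counter \<open>i\<close> and peak code \<open>p\<close>.
\<close>

definition prefix_peak_code_step :: "(nat \<Rightarrow> nat) \<Rightarrow> nat \<Rightarrow> nat" where
  "prefix_peak_code_step ind T = npair (nfst T) (npair (Suc (nfst (nsnd T))) (peak_update_halt_code ind (nsnd (nsnd T))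
      ((step_code ^^ nsnd (nfst (nsnd T))) (init_code (nfst (nfst T)) (with_last_code (nsnd (nfst T)) (nfst (nfst (nsnd T))))))))"

definition prefix_peak_code :: "(nat \<Rightarrow> nat) \<Rightarrow> nat \<Rightarrow> nat" where
  "prefix_peak_code ind N = nsnd (nsnd ((prefix_peak_code_step ind ^^ Suc (nsnd (nhd (nrev (nsnd (N - 1))))))
      (npair (npair (nsnd (nfst (N - 1))) (nsnd (N - 1))) (npair 0 0))))"

definition approx_code :: "(nat \<Rightarrow> nat) \<Rightarrow> nat \<Rightarrow> nat option" where
  "approx_code ind N = (if 2 - prefix_peak_code ind N = 0 then Some (prefix_peak_code ind N - 2) else None)"

lemma partrec1_approx_code:
  assumes ind: "totalrec1 ind"
  shows "partrec1 (approx_code ind)"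
proof -
  have with_last: "totalrec1 (\<lambda>x. with_last_code (f x) (g x))" if "totalrec1 f" "totalrec1 g" for f g
    unfolding with_last_code_def
    using that by (intro totalrec1_nrev totalrec1_ncons totalrec1_npair totalrec1_const totalrec1_ntl)
  have "totalrec1 (prefix_peak_code_step ind)"
    unfolding prefix_peak_code_step_def peak_update_halt_code_def peak_update_code_def
    by (intro totalrec1_if totalrec1_npair totalrec1_nfst totalrec1_nsnd totalrec1_id totalrec1_const
        totalrec1_Suc totalrec1_run totalrec1_add totalrec1_diff totalrec1_comp[OF ind] with_last)
  then have code: "totalrec1 (prefix_peak_code ind)"
    unfolding prefix_peak_code_def
    by (intro totalrec1_nsnd totalrec1_funpow totalrec1_Suc totalrec1_nhd totalrec1_nrev totalrec1_npair
        totalrec1_nfst totalrec1_diff totalrec1_id totalrec1_const)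
  then have "partrec1 (\<lambda>N. if 2 - prefix_peak_code ind N = 0 then Some (prefix_peak_code ind N - 2) else None)"
    by (intro partrec1_guard totalrec1_diff totalrec1_const totalrec1_comp[OF code] totalrec1_id)
  then show ?thesis
    unfolding approx_code_def[abs_def] .
qed

lemma enc_snoc: "enc (x @ [VN t]) = list_encode (map enc_val x @ [npair 0 t])"
  unfolding enc_def npair_def by simp

lemma enc_Cons: "enc ((VN n # x) @ [VN t]) = Suc (npair (npair 0 n) (enc (x @ [VN t])))"
  unfolding enc_def by (simp add: ncons_def npair_def)

context
  fixes ind :: "nat \<Rightarrow> nat" and lt :: "nat \<Rightarrow> nat \<Rightarrow> bool"
  assumes ind: "\<And>a b. ind (npair a b) = (if lt a b then 1 else 0)"
begin

lemma peak_update_halt_code_peak_code: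
  "peak_update_halt_code ind (peak_code p) R = peak_code (peak_update lt p (halt_value R))"
proof -
  have "peak_update_code ind (peak_code p) v = peak_code (peak_update lt p (Some v))" for v
    by (cases p) (auto simp: peak_update_code_def peak_update_def ind)
  then show ?thesis
    by (auto simp: peak_update_halt_code_def halt_value_def peak_update_def)
qed

lemma funpow_prefix_peak_code_step:
  "(prefix_peak_code_step ind ^^ k) (npair (npair c (enc (x @ [VN t]))) (npair 0 0)) =
   npair (npair c (enc (x @ [VN t]))) (npair k (peak_code (prefix_peak lt (trial c x) k)))"
proof (induction k)
  case 0
  then show ?case
    by (simp add: npair_0_0)
next
  case (Suc k)
  have "with_last_code (enc (x @ [VN t])) s = enc (x @ [VN s])" for s
    unfolding with_last_code_def enc_snoc by simp
  then show ?case
    using Suc by (simp add: prefix_peak_code_step_def peak_update_halt_code_peak_code trial_def)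
qed

lemma approx_code_enc: "approx_code ind (enc ((VN n # x) @ [VN t])) = running_peak lt (trial n x) t"
proof -
  have "nsnd (nhd (nrev (enc (x @ [VN t])))) = t"
    unfolding enc_snoc by (simp add: hd0_def)
  then have "prefix_peak_code ind (enc ((VN n # x) @ [VN t])) = peak_code (prefix_peak lt (trial n x) (Suc t))"
    unfolding prefix_peak_code_def enc_Cons
    by (simp add: funpow_prefix_peak_code_step del: funpow.simps prefix_peak.simps)
  then show ?thesis
    unfolding approx_code_def running_peak_def by (cases "prefix_peak lt (trial n x) (Suc t)") auto
qed

end

section \<open>The universal function\<close>

lemma in_space_Cons_CN: "in_space (CN # X) y \<longleftrightarrow> (\<exists>n x. y = VN n # x \<and> in_space X x)"
  unfolding in_space_def by (cases y) (auto elim: in_comp.elims)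

definition univ_approx :: "bcomp list \<Rightarrow> ('d \<Rightarrow> 'd \<Rightarrow> bool) \<Rightarrow> (nat \<Rightarrow> 'd) \<Rightarrow> bval list \<Rightarrow> nat \<Rightarrow> 'd option" where
  "univ_approx X lt \<rho> y t = (case y of
     VN n # x \<Rightarrow> if in_space X x then map_option \<rho> (running_peak (\<lambda>a b. lt (\<rho> a) (\<rho> b)) (trial n x) t) else None
   | _ \<Rightarrow> None)"

lemma univ_approx_Cons:
  "univ_approx X lt \<rho> (VN n # x) t =
   (if in_space X x then map_option \<rho> (running_peak (\<lambda>a b. lt (\<rho> a) (\<rho> b)) (trial n x) t) else None)"
  unfolding univ_approx_def by simp

lemma univ_approx_outside: "\<not> in_space (CN # X) y \<Longrightarrow> univ_approx X lt \<rho> y t = None"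
  unfolding univ_approx_def in_space_Cons_CN by (auto split: list.split bval.split)

context
  fixes lt :: "'d \<Rightarrow> 'd \<Rightarrow> bool" and \<rho> :: "nat \<Rightarrow> 'd"
  assumes poset: "computable_poset lt \<rho>"
begin

lemma bij_enum: "bij \<rho>"
  using poset unfolding computable_poset_def by blast

interpretation strict_order lt
  using poset unfolding computable_poset_def by unfold_locales blast+

interpretation codes: strict_order "\<lambda>a b. lt (\<rho> a) (\<rho> b)"
  using poset unfolding computable_poset_def by unfold_locales blast+

lemma order_decider:
  obtains ind where "totalrec1 ind" "\<And>a b. ind (npair a b) = (if lt (\<rho> a) (\<rho> b) then 1 else 0)"
  using poset unfolding computable_poset_def npair_def by auto

lemma map_inv_enum:
  "map_option (inv \<rho>) (map_option \<rho> v) = v"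
  using bij_enum by (simp add: option.map_comp comp_def bij_is_inj option.map_ident)

lemma pc2_univ_approx: "pc2 \<rho> (CN # X) (univ_approx X lt \<rho>)"
proof -
  obtain ind where ind: "totalrec1 ind" "\<And>a b. ind (npair a b) = (if lt (\<rho> a) (\<rho> b) then 1 else 0)"
    using order_decider by blast
  have "map_option (inv \<rho>) (univ_approx X lt \<rho> y t) = approx_code ind (enc (y @ [VN t]))"
    if "in_space (CN # X) y" for y t
    using that approx_code_enc[where lt = "\<lambda>a b. lt (\<rho> a) (\<rho> b)", OF ind(2)] map_inv_enum
    by (auto simp: in_space_Cons_CN univ_approx_Cons)
  then show ?thesis
    unfolding pc2_def using partrec1_approx_code[OF ind(1)] by blast
qed

lemma pc2_univ_approx_row: "pc2 \<rho> X (\<lambda>x. univ_approx X lt \<rho> (VN n # x))"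
proof -
  obtain ind where ind: "totalrec1 ind" "\<And>a b. ind (npair a b) = (if lt (\<rho> a) (\<rho> b) then 1 else 0)"
    using order_decider by blast
  have "totalrec1 (\<lambda>N. Suc (npair (npair 0 n) N))"
    by (intro totalrec1_Suc totalrec1_npair totalrec1_const totalrec1_id)
  then have "partrec1 (\<lambda>N. approx_code ind (Suc (npair (npair 0 n) N)))"
    by (rule partrec1_comp_totalrec1[OF partrec1_approx_code[OF ind(1)]])
  moreover have "map_option (inv \<rho>) (univ_approx X lt \<rho> (VN n # x) t) =
      approx_code ind (Suc (npair (npair 0 n) (enc (x @ [VN t]))))" if "in_space X x" for x t
    using that approx_code_enc[where lt = "\<lambda>a b. lt (\<rho> a) (\<rho> b)", OF ind(2)] map_inv_enum by (simp add: univ_approx_Cons enc_Cons[symmetric])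
  ultimately show ?thesis
    unfolding pc2_def by blast
qed

lemma mono2_univ_approx: "mono2 lt (univ_approx X lt \<rho>)"
  unfolding mono2_def
proof (intro allI impI)
  fix y t t' a b assume "t \<le> t'" "univ_approx X lt \<rho> y t = Some a" "univ_approx X lt \<rho> y t' = Some b"
  then obtain n x a' b' where "y = VN n # x" "a = \<rho> a'" "b = \<rho> b'"
    "running_peak (\<lambda>a b. lt (\<rho> a) (\<rho> b)) (trial n x) t = Some a'"
    "running_peak (\<lambda>a b. lt (\<rho> a) (\<rho> b)) (trial n x) t' = Some b'"
    by (auto simp: univ_approx_def split: list.splits bval.splits if_splits)
  then show "a = b \<or> lt a b"
    using codes.running_peak_mono \<open>t \<le> t'\<close> unfolding codes.mono_seq_def codes.leq_def by blast
qed

lemma univ_approx_in_MaxPR: "maxD lt (univ_approx X lt \<rho>) \<in> MaxPR (CN # X) lt \<rho>"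
  unfolding MaxPR_def using pc2_univ_approx mono2_univ_approx univ_approx_outside by blast

lemma univ_approx_row_in_MaxPR: "(\<lambda>x. maxD lt (univ_approx X lt \<rho>) (VN n # x)) \<in> MaxPR X lt \<rho>"
proof -
  have "(\<lambda>x. maxD lt (univ_approx X lt \<rho>) (VN n # x)) = maxD lt (\<lambda>x. univ_approx X lt \<rho> (VN n # x))"
    unfolding maxD_def by simp
  moreover have "mono2 lt (\<lambda>x. univ_approx X lt \<rho> (VN n # x))"
    using mono2_univ_approx unfolding mono2_def by blast
  ultimately show ?thesis
    unfolding MaxPR_def using pc2_univ_approx_row by (auto simp: univ_approx_Cons)
qed

lemma MaxPR_is_univ_approx_row:
  assumes "M \<in> MaxPR X lt \<rho>"
  shows "\<exists>c. M = (\<lambda>x. maxD lt (univ_approx X lt \<rho>) (VN c # x))"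
proof -
  obtain \<phi> g F where M: "M = maxD lt \<phi>" and "mono2 lt \<phi>" and outside: "\<forall>y t. \<not> in_space X y \<longrightarrow> \<phi> y t = None"
    and g: "\<forall>y t. in_space X y \<longrightarrow> map_option (inv \<rho>) (\<phi> y t) = g (enc (y @ [VN t]))"
    and F: "precfn 1 F" "\<forall>z. g z = F [z]"
    using assms unfolding MaxPR_def pc2_def partrec1_def by blast
  obtain c where c: "\<forall>z v. F [z] = Some v \<longleftrightarrow> (\<exists>k. (step_code ^^ k) (init_code c z) = npair 1 (npair v 0))"
    using precfn_normal_form[OF F(1)] by blast
  have "maxD lt \<phi> x = maxD lt (univ_approx X lt \<rho>) (VN c # x)" for x
  proof (cases "in_space X x")
    case True
    let ?w = "\<lambda>i. map_option \<rho> (trial c x i)"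
    have "ran (trial c x) = inv \<rho> ` ran (\<phi> x)"
      unfolding ran_trial[OF c] ran_map_option[symmetric] using g F(2) True by simp
    then have enum: "ran ?w = ran (\<phi> x)"
      unfolding ran_map_option using bij_enum by (simp add: bij_is_surj image_f_inv_f)
    have "mono_seq (\<phi> x)"
      using \<open>mono2 lt \<phi>\<close> unfolding mono2_def mono_seq_def leq_def by blast
    then have "max_elem lt (ran (running_peak lt ?w)) = max_elem lt (ran (\<phi> x))"
      using enum by (rule max_elem_running_peak)
    moreover have "univ_approx X lt \<rho> (VN c # x) = running_peak lt ?w"
      using True by (simp add: fun_eq_iff univ_approx_Cons running_peak_map[OF bij_is_inj[OF bij_enum]])
    ultimately show ?thesis
      by (simp add: maxD_eq_max_elem)
  qed (simp add: maxD_def outside univ_approx_Cons)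
  then show ?thesis
    unfolding M by blast
qed

end

theorem mainTheorem6:
  fixes X :: "bcomp list" and lt :: "'d \<Rightarrow> 'd \<Rightarrow> bool" and \<rho> :: "nat \<Rightarrow> 'd"
  assumes "X \<noteq> []"
    and "computable_poset lt \<rho>"
  shows "\<exists>E. E \<in> MaxPR (CN # X) lt \<rho> \<and>
             {(\<lambda>x. E (VN n # x)) | n. True} = MaxPR X lt \<rho>"
proof (intro exI conjI)
  show "maxD lt (univ_approx X lt \<rho>) \<in> MaxPR (CN # X) lt \<rho>"
    using assms(2) by (rule univ_approx_in_MaxPR)
  show "{(\<lambda>x. maxD lt (univ_approx X lt \<rho>) (VN n # x)) | n. True} = MaxPR X lt \<rho>"
    using univ_approx_row_in_MaxPR[OF assms(2)] MaxPR_is_univ_approx_row[OF assms(2)] by blast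
qed

end
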